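(* For all $s\in\mathcal{Q}$ one has $F_s(J_s)\subset\mathbb{Z}^{>0}$. If moreover $s\notin\{0,\infty\}$ and $s_0,s_1$ are the parents of $s$, then pointwise on $\mathbb{Z}^2$ $$1\!\!1_{J_s}\cdot\sup\left\{1\!\!1_{\{P^{s_0}_0\}}*F_{s_1},\ 1\!\!1_{\{P^{s_1}_0\}}*F_{s_0},\ 1\!\!1_{\{Q^{s_0}_0\}}*F_{s_1},\ 1\!\!1_{\{Q^{s_1}_0\}}*F_{s_0}\right\}\leq F_s .$$
   Context: $\mathcal{Q}=\mathbb{Q}^{\geq0}\cup\{\infty\}$; each $\sigma\in\mathcal{Q}$ is written uniquely $\sigma=q/p$ with $p,q\in\mathbb{N}$ coprime ($\infty=1/0$). For such $\sigma$: $J_\sigma=\{(\alpha,\beta)\in\mathbb{Z}^2:\ \alpha\equiv q,\ \beta\equiv p\pmod2;\ \alpha\geq-q;\ \beta\geq-p;\ \alpha+\beta\leq p+q-2;\ p\alpha+q\beta\geq0\}$, $P^\sigma_i=(q+2i,-p)$, $Q^\sigma_j=(-q,p+2j)$. Parents: for $\sigma\in\mathcal{Q}\smallsetminus\{0,1,\infty\}$, let $L_\sigma$ be the hyperbolic geodesic in the upper half-plane from $\sigma$ to $\sqrt{-1}$; the parents of $\sigma$ are the endpoints of the first edge of the Farey triangulation (ideal triangles with vertices $\frac{q_0}{p_0},\frac{q_0+q_1}{p_0+p_1},\frac{q_1}{p_1}$, $q_0p_1-q_1p_0=\pm1$) crossed by $L_\sigma$, closest to $\sigma$; the parents of $1$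 are $0$ and $\infty$. For $\sigma\notin\{0,1,\infty\}$ the parents are labelled $\sigma_0,\sigma_1$ so that the parents of $\sigma_1$ are $\sigma_0$ and another point $\sigma'\in\mathcal{Q}$. Convolution of finitely supported functions $\mathbb{Z}^2\to\mathbb{Z}$: $F*G(u)=\sum_{x+y=u}F(x)G(y)$ (so $1\!\!1_{\{\xi\}}*F(u)=F(u-\xi)$); $1\!\!1_U$ is the indicator of $U$; $\Lambda=\{(0,0),(0,2),(2,0)\}$. Define $F_\sigma=1\!\!1_{J_\sigma}$ for $\sigma\in\{0,1,\infty\}$, and recursively $F_\sigma=F_{\sigma_0}*F_{\sigma_1}*1\!\!1_\Lambda-F_{\sigma'}$ for $\sigma\in\mathcal{Q}\smallsetminus\{0,1,\infty\}$. The supremum and inequality are pointwise. *)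

theory Defs
  imports Complex_Main
begin

(* Points of the extended set Q = Q^{>=0} \<union> {\<infinity>} are represented by their unique
   reduced representation (q,p) of sigma = q/p, q,p >= 0 coprime; \<infinity> = (1,0), 0 = (0,1). *)
definition Qset :: "(int \<times> int) set" where
  "Qset = {(q,p). 0 \<le> q \<and> 0 \<le> p \<and> coprime q p}"

definition Qzero :: "int \<times> int" where "Qzero = (0,1)"
definition Qone :: "int \<times> int" where "Qone = (1,1)"
definition Qinf :: "int \<times> int" where "Qinf = (1,0)"

definition J :: "int \<times> int \<Rightarrow> (int \<times> int) set" where
  "J \<sigma> = (case \<sigma> of (q,p) \<Rightarrow>
     {(\<alpha>,\<beta>). \<alpha> mod 2 = q mod 2 \<and> \<beta> mod 2 = p mod 2 \<and> \<alpha> \<ge> -q \<and> \<beta> \<ge> -p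
        \<and> \<alpha> + \<beta> \<le> p + q - 2 \<and> p * \<alpha> + q * \<beta> \<ge> 0})"

definition Ppt :: "int \<times> int \<Rightarrow> int \<Rightarrow> int \<times> int" where
  "Ppt \<sigma> i = (case \<sigma> of (q,p) \<Rightarrow> (q + 2*i, -p))"

definition Qpt :: "int \<times> int \<Rightarrow> int \<Rightarrow> int \<times> int" where
  "Qpt \<sigma> j = (case \<sigma> of (q,p) \<Rightarrow> (-q, p + 2*j))"

definition ind :: "(int \<times> int) set \<Rightarrow> int \<times> int \<Rightarrow> int" where
  "ind U x = (if x \<in> U then 1 else 0)"

definition conv :: "(int \<times> int \<Rightarrow> int) \<Rightarrow> (int \<times> int \<Rightarrow> int) \<Rightarrow> int \<times> int \<Rightarrow> int" where
  "conv F G u = (\<Sum>x\<in>{x. F x \<noteq> 0}. F x * G (fst u - fst x, snd u - snd x))"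

definition Lambda :: "(int \<times> int) set" where
  "Lambda = {(0,0), (0,2), (2,0)}"

definition farey_nbr :: "int \<times> int \<Rightarrow> int \<times> int \<Rightarrow> bool" where
  "farey_nbr a b = (case a of (q0,p0) \<Rightarrow> case b of (q1,p1) \<Rightarrow> \<bar>q0 * p1 - q1 * p0\<bar> = 1)"

(* the hyperbolic geodesic (in the open upper half plane) joining the cusps a and b
   (for a Farey pair at most one of them is \<infinity>, i.e. has p = 0) *)
definition geod :: "int \<times> int \<Rightarrow> int \<times> int \<Rightarrow> complex set" where
  "geod a b = (case a of (q0,p0) \<Rightarrow> case b of (q1,p1) \<Rightarrow>
     {z. 0 < Im z \<and>
        (if p0 = 0 then Re z = real_of_int q1 / real_of_int p1
         else if p1 = 0 then Re z = real_of_int q0 / real_of_int p0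
         else cmod (z - complex_of_real ((real_of_int q0 / real_of_int p0 + real_of_int q1 / real_of_int p1) / 2))
              = \<bar>real_of_int q0 / real_of_int p0 - real_of_int q1 / real_of_int p1\<bar> / 2)})"

(* L_sigma for sigma = q/p in Q^{>0} \<setminus> {1}: the geodesic arc from x = q/p to i.
   It lies on the semicircle centred at the real point c = (x^2-1)/(2x) (the unique real
   point equidistant from x and i), and the arc from x to i is the part with Re z \<ge> 0. *)
definition Lgeo :: "int \<times> int \<Rightarrow> complex set" where
  "Lgeo \<sigma> = (case \<sigma> of (q,p) \<Rightarrow>
     let x = real_of_int q / real_of_int p; c = (x^2 - 1) / (2*x) in
     {z. 0 < Im z \<and> cmod (z - complex_of_real c) = cmod (\<i> - complex_of_real c) \<and> 0 \<le> Re z})"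

(* {a,b} is the first Farey edge crossed by L_sigma, i.e. the one whose crossing point is
   closest to sigma along L_sigma (along the arc, closeness to sigma = larger real part). *)
definition first_edge :: "int \<times> int \<Rightarrow> int \<times> int \<Rightarrow> int \<times> int \<Rightarrow> bool" where
  "first_edge \<sigma> a b \<longleftrightarrow> a \<in> Qset \<and> b \<in> Qset \<and> farey_nbr a b \<and>
     (\<exists>z. z \<in> Lgeo \<sigma> \<inter> geod a b \<and>
        (\<forall>a' b' z'. farey_nbr a' b' \<and> geod a' b' \<noteq> geod a b \<and> z' \<in> Lgeo \<sigma> \<inter> geod a' b'
             \<longrightarrow> Re z' < Re z))"

definition is_parents :: "int \<times> int \<Rightarrow> int \<times> int \<Rightarrow> int \<times> int \<Rightarrow> bool" where
  "is_parents \<sigma> a b \<longleftrightarrow>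
     (\<sigma> = Qone \<and> {a,b} = {Qzero, Qinf}) \<or>
     (\<sigma> \<in> Qset \<and> \<sigma> \<notin> {Qzero, Qone, Qinf} \<and> first_edge \<sigma> a b)"

(* the system (F_sigma) as an inductively generated graph; F_sigma is its unique value *)
inductive isF :: "int \<times> int \<Rightarrow> (int \<times> int \<Rightarrow> int) \<Rightarrow> bool" where
  base: "\<sigma> \<in> {Qzero, Qone, Qinf} \<Longrightarrow> isF \<sigma> (ind (J \<sigma>))"
| step: "\<sigma> \<in> Qset \<Longrightarrow> \<sigma> \<notin> {Qzero, Qone, Qinf} \<Longrightarrow>
         is_parents \<sigma> \<sigma>0 \<sigma>1 \<Longrightarrow> is_parents \<sigma>1 \<sigma>0 \<sigma>' \<Longrightarrow>
         isF \<sigma>0 f0 \<Longrightarrow> isF \<sigma>1 f1 \<Longrightarrow> isF \<sigma>' f' \<Longrightarrow>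
         isF \<sigma> (\<lambda>u. conv (conv f0 f1) (ind Lambda) u - f' u)"

definition F :: "int \<times> int \<Rightarrow> int \<times> int \<Rightarrow> int" where
  "F \<sigma> = (THE f. isF \<sigma> f)"

end

theory Submission
  imports Defs "HOL-Library.Product_Plus"
begin

text \<open>The parents of \<open>\<sigma> = q/p\<close> are the Farey neighbours \<open>s\<^sub>0, s\<^sub>1\<close> with \<open>s\<^sub>0 + s\<^sub>1 = (q, p)\<close>:
  \<open>L\<^sub>\<sigma>\<close> crosses the geodesic joining them at real part \<open>pqC/(p\<^sup>2C + 1)\<close>, \<open>C = s\<^sub>0 \<bullet> s\<^sub>1\<close>, and an
  arithmetic argument in the basis \<open>(s\<^sub>0, s\<^sub>1)\<close> shows that no other Farey edge meets \<open>L\<^sub>\<sigma>\<close> closer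
  to \<open>\<sigma>\<close>. So \<open>F\<close> is well defined by induction on \<open>q + p\<close>, and the theorem follows from an
  invariant proved by the same induction: \<open>F\<^sub>\<sigma>\<close> is supported on \<open>J\<^sub>\<sigma>\<close>, positive there, \<open>1\<close> at the
  corners \<open>P\<^sup>\<sigma>\<^sub>0, Q\<^sup>\<sigma>\<^sub>0\<close>, and dominates the four shifts of the \<open>F\<close> of its parents by their corners
  on all of \<open>\<int>\<^sup>2\<close>, except for two of them at one exceptional point outside \<open>J\<^sub>\<sigma>\<close>, where
  \<open>F\<^sub>\<sigma>\<close> vanishes.

  In the inductive step \<open>s\<^sub>1 = s\<^sub>0 \<oplus> s'\<close> and \<open>F\<^sub>\<sigma> = F\<^bsub>s0\<^esub> * F\<^bsub>s1\<^esub> * 1\<^sub>\<Lambda> - F\<^bsub>s'\<^esub>\<close>. The sumset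
  \<open>J\<^bsub>s0\<^esub> + \<Lambda> + J\<^bsub>s1\<^esub>\<close> covers \<open>J\<^sub>\<sigma>\<close> and lies in it except for the exceptional point, which gives
  the support and positivity; the value \<open>1\<close> at the corners comes from their unique decomposition;
  and the convolution at \<open>u\<close> contains the terms \<open>F\<^bsub>s1\<^esub>(u - P\<^bsup>s0\<^esup>\<^sub>0)\<close> and \<open>F\<^bsub>s1\<^esub>(u - Q\<^bsup>s0\<^esup>\<^sub>0)\<close>, each of
  which dominates \<open>F\<^bsub>s'\<^esub>(u)\<close> by the invariant for \<open>s\<^sub>1\<close>, so the domination propagates.\<close>

section \<open>Reduced fractions and Farey mediants\<close>

lemma Qset_iff: "(q, p) \<in> Qset \<longleftrightarrow> 0 \<le> q \<and> 0 \<le> p \<and> coprime q p"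
  by (simp add: Qset_def)

lemma Qset_base: "Qzero \<in> Qset" "Qone \<in> Qset" "Qinf \<in> Qset"
  by (auto simp: Qzero_def Qone_def Qinf_def Qset_def)

lemma Qset_nonneg: "a \<in> Qset \<Longrightarrow> 0 \<le> fst a \<and> 0 \<le> snd a"
  by (cases a) (simp add: Qset_iff)

lemma Qset_nonzero: "a \<in> Qset \<Longrightarrow> a \<noteq> 0"
  by (cases a) (auto simp: Qset_iff zero_prod_def)

lemma Qset_fst_zero: "(0, p) \<in> Qset \<Longrightarrow> p = 1"
  and Qset_snd_zero: "(q, 0) \<in> Qset \<Longrightarrow> q = 1"
  by (auto simp: Qset_iff)

lemma Qset_cases:
  assumes "(q, p) \<in> Qset"
  obtains "(q, p) = Qinf" | "(q, p) = Qzero" | "1 \<le> q" "1 \<le> p"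
proof (cases "q = 0 \<or> p = 0")
  case True
  then show ?thesis using assms that Qset_fst_zero[of p] Qset_snd_zero[of q]
    by (auto simp: Qinf_def Qzero_def)
next
  case False
  then show ?thesis using assms that by (auto simp: Qset_iff)
qed

lemma Qset_ge_one: "\<sigma> \<in> Qset \<Longrightarrow> \<sigma> \<notin> {Qzero, Qinf} \<Longrightarrow> 1 \<le> fst \<sigma> \<and> 1 \<le> snd \<sigma>"
  by (cases \<sigma>) (auto elim: Qset_cases)

lemma coprime_if_det_one:
  fixes a b c d :: int
  assumes "\<bar>a * d - b * c\<bar> = 1"
  shows "coprime a c" "coprime b d"
proof -
  have "k dvd 1" if "k dvd a \<and> k dvd c \<or> k dvd b \<and> k dvd d" for k
    using that assms by (metis dvd_abs_iff dvd_diff dvd_mult dvd_mult2)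
  then show "coprime a c" "coprime b d" by (auto intro: coprimeI)
qed

text \<open>\<open>orient a b = 1\<close> says that the fraction \<open>a\<close> is smaller than its Farey neighbour \<open>b\<close>.\<close>

definition orient :: "int \<times> int \<Rightarrow> int \<times> int \<Rightarrow> int" where
  "orient a b = fst b * snd a - fst a * snd b"

definition farey_mediant :: "int \<times> int \<Rightarrow> int \<times> int \<Rightarrow> int \<times> int \<Rightarrow> bool" where
  "farey_mediant \<sigma> a b \<longleftrightarrow> a \<in> Qset \<and> b \<in> Qset \<and> a + b = \<sigma> \<and> \<bar>orient a b\<bar> = 1"

lemma orient_commute: "orient b a = - orient a b"
  by (simp add: orient_def)

lemma orient_add_right: "orient a (a + b) = orient a b"
  by (simp add: orient_def algebra_simps)

lemma farey_mediant_commute: "farey_mediant \<sigma> a b \<Longrightarrow> farey_mediant \<sigma> b a"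
  by (auto simp: farey_mediant_def orient_def abs_minus_commute add.commute)

lemma farey_mediant_orient: "farey_mediant \<sigma> a b \<Longrightarrow> orient a b = 1 \<or> orient a b = -1"
  by (auto simp: farey_mediant_def)

lemma farey_mediant_ge_one:
  assumes "farey_mediant \<sigma> a b"
  shows "1 \<le> fst \<sigma>" "1 \<le> snd \<sigma>"
proof -
  obtain qa pa qb pb where ab: "a = (qa, pa)" "b = (qb, pb)" by fastforce
  have nn: "0 \<le> qa" "0 \<le> pa" "0 \<le> qb" "0 \<le> pb" and \<sigma>: "\<sigma> = (qa + qb, pa + pb)"
    and det: "\<bar>qb * pa - qa * pb\<bar> = 1"
    using assms Qset_nonneg by (auto simp: farey_mediant_def orient_def ab)
  have "qa \<noteq> 0 \<or> qb \<noteq> 0" "pa \<noteq> 0 \<or> pb \<noteq> 0" using det by auto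
  then show "1 \<le> fst \<sigma>" "1 \<le> snd \<sigma>" using nn \<sigma> by auto
qed

lemma farey_mediant_not_Qzero_Qinf: "farey_mediant \<sigma> a b \<Longrightarrow> \<sigma> \<notin> {Qzero, Qinf}"
  using farey_mediant_ge_one[of \<sigma> a b] by (auto simp: Qzero_def Qinf_def)

lemma farey_mediant_less:
  assumes "farey_mediant \<sigma> a b"
  shows "fst a + snd a < fst \<sigma> + snd \<sigma>" "fst b + snd b < fst \<sigma> + snd \<sigma>"
proof -
  have "a \<in> Qset" "b \<in> Qset" "\<sigma> = a + b"
    using assms by (auto simp: farey_mediant_def)
  moreover have "0 < fst x + snd x" if "x \<in> Qset" for x
    using Qset_nonneg[OF that] Qset_nonzero[OF that] by (cases x) (auto simp: zero_prod_def)
  ultimately show "fst a + snd a < fst \<sigma> + snd \<sigma>" "fst b + snd b < fst \<sigma> + snd \<sigma>"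
    using Qset_nonneg by fastforce+
qed

lemma farey_mediant_exists:
  assumes "\<sigma> \<in> Qset" "\<sigma> \<notin> {Qzero, Qinf}"
  obtains a b where "farey_mediant \<sigma> a b"
proof -
  obtain q p where \<sigma>: "\<sigma> = (q, p)" by fastforce
  have qp: "1 \<le> q" "1 \<le> p" using Qset_ge_one[OF assms] \<sigma> by auto
  obtain u v where uv: "u * q + v * p = 1"
    using bezout_int[of q p] assms \<sigma> by (auto simp: Qset_iff)
  define p0 where "p0 = (u - 1) mod p + 1"
  define q0 where "q0 = (q * p0 - 1) div p"
  have "0 \<le> (u - 1) mod p" "(u - 1) mod p < p" using qp by simp_all
  then have p0: "1 \<le> p0" "p0 \<le> p" by (simp_all add: p0_def)
  have p0_eq: "p0 = u - p * ((u - 1) div p)"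
    unfolding p0_def using minus_mult_div_eq_mod[of "u - 1" p] by linarith
  have "q * p0 - 1 = (u * q + v * p - 1) + p * (- v - q * ((u - 1) div p))"
    unfolding p0_eq by (simp add: algebra_simps)
  also have "\<dots> = p * (- v - q * ((u - 1) div p))" using uv by simp
  finally have "q * p0 - 1 = p * (- v - q * ((u - 1) div p))" .
  then have q0: "q * p0 - 1 = p * q0" using qp by (simp add: q0_def)
  have "1 * 1 \<le> q * p0" "q * p0 \<le> q * p"
    using qp p0 by (intro mult_mono mult_left_mono; simp)+
  then have "0 \<le> p * q0" "p * q0 < p * q" using q0 by (simp_all add: mult.commute)
  then have "0 \<le> q0" "q0 < q" using qp by (simp_all add: zero_le_mult_iff)
  moreover have det: "\<bar>q0 * (p - p0) - (q - q0) * p0\<bar> = 1"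
    using q0 by (simp add: algebra_simps)
  ultimately have "farey_mediant \<sigma> (q0, p0) (q - q0, p - p0)"
    using p0 coprime_if_det_one[OF det] \<sigma>
    by (simp add: farey_mediant_def Qset_iff orient_def abs_minus_commute algebra_simps)
  then show thesis by (rule that)
qed

text \<open>A decomposition is determined by the orientation: \<open>a\<close> is the unique point of the
  triangle \<open>0 < a < \<sigma>\<close> on the line \<open>orient a \<sigma> = orient a b\<close>, as \<open>\<sigma>\<close> is primitive.\<close>

lemma farey_mediant_unique_oriented:
  assumes \<sigma>: "\<sigma> \<in> Qset" and ab: "farey_mediant \<sigma> a b" and ab': "farey_mediant \<sigma> a' b'"
    and ori: "orient a' b' = orient a b"
  shows "a' = a"
proof -
  obtain q p where \<sigma>_eq: "\<sigma> = (q, p)" by fastforce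
  have cop: "coprime q p" and q: "1 \<le> q"
    using \<sigma> farey_mediant_ge_one[OF ab] \<sigma>_eq by (auto simp: Qset_iff)
  define d where "d = a' - a"
  have "orient d \<sigma> = 0"
    using ori ab ab' orient_add_right[of a b] orient_add_right[of a' b']
    by (auto simp: farey_mediant_def d_def orient_def algebra_simps)
  then have dq: "fst d * p = snd d * q" by (auto simp: orient_def \<sigma>_eq mult.commute)
  then have "q dvd fst d * p" by simp
  then obtain k where k: "fst d = q * k"
    using cop by (auto simp: coprime_commute coprime_dvd_mult_left_iff)
  then have "snd d = p * k" using dq q by (simp add: algebra_simps)
  with k have dk: "d = (k * q, k * p)"
    by (simp add: \<sigma>_eq prod_eq_iff algebra_simps)
  have "a \<in> Qset" "b \<in> Qset" "a' \<in> Qset" "b' \<in> Qset"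
    using ab ab' by (auto simp: farey_mediant_def)
  then have nn: "0 \<le> fst x" "0 \<le> snd x" "x \<noteq> 0" if "x \<in> {a, b, a', b'}" for x
    using that Qset_nonneg Qset_nonzero by blast+
  have p: "0 \<le> p" using \<sigma> \<sigma>_eq by (simp add: Qset_iff)
  have sums: "a + b = \<sigma>" "a' + b' = \<sigma>" using ab ab' by (auto simp: farey_mediant_def)
  have "k = 0"
  proof (rule ccontr)
    assume "k \<noteq> 0"
    then consider "1 \<le> k" | "k \<le> -1" by linarith
    then show False
    proof cases
      case 1
      have "1 * q \<le> k * q" "1 * p \<le> k * p" using 1 q p by (intro mult_right_mono; simp)+
      then have "b' = 0"
        using nn[of b'] nn[of a] sums dk unfolding d_def by (auto simp: prod_eq_iff \<sigma>_eq)
      then show False using nn[of b'] by simp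
    next
      case 2
      have "k * q \<le> (- 1) * q" "k * p \<le> (- 1) * p" using 2 q p by (intro mult_right_mono; simp)+
      then have "a' = 0"
        using nn[of a'] nn[of b] sums dk unfolding d_def by (auto simp: prod_eq_iff \<sigma>_eq)
      then show False using nn[of a'] by simp
    qed
  qed
  then show ?thesis using dk by (simp add: d_def flip: zero_prod_def)
qed

lemma farey_mediant_unique:
  assumes "\<sigma> \<in> Qset" "farey_mediant \<sigma> a b" "farey_mediant \<sigma> a' b'"
  shows "(a' = a \<and> b' = b) \<or> (a' = b \<and> b' = a)"
proof -
  have sums: "a + b = \<sigma>" "a' + b' = \<sigma>" using assms by (auto simp: farey_mediant_def)
  consider "orient a' b' = orient a b" | "orient a' b' = orient b a"
    using assms(2,3)[THEN farey_mediant_orient] orient_commute[of a b] by auto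
  then show ?thesis
  proof cases
    case 1
    then have "a' = a" by (rule farey_mediant_unique_oriented[OF assms])
    then show ?thesis using sums by (metis add_left_cancel)
  next
    case 2
    then have "a' = b"
      by (rule farey_mediant_unique_oriented[OF assms(1) farey_mediant_commute[OF assms(2)] assms(3)])
    then show ?thesis using sums by (metis add.commute add_left_cancel)
  qed
qed

lemma farey_mediant_Qone_iff: "farey_mediant Qone a b \<longleftrightarrow> {a, b} = {Qzero, Qinf}"
proof -
  have base: "farey_mediant Qone Qzero Qinf"
    by (simp add: farey_mediant_def Qset_iff orient_def Qzero_def Qinf_def Qone_def)
  show ?thesis
    using farey_mediant_unique[OF Qset_base(2) base, of a b] base farey_mediant_commute[OF base]
    by (auto simp: doubleton_eq_iff)
qed

lemma farey_mediant_pos_inner: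
  assumes "farey_mediant \<sigma> a b" "\<sigma> \<noteq> Qone"
  shows "1 \<le> fst a * fst b + snd a * snd b"
proof (rule ccontr)
  assume "\<not> ?thesis"
  have a: "a \<in> Qset" and b: "b \<in> Qset" using assms by (auto simp: farey_mediant_def)
  with \<open>\<not> ?thesis\<close> have "fst a * fst b = 0" "snd a * snd b = 0"
    using Qset_nonneg[OF a] Qset_nonneg[OF b] by (smt (verit) mult_nonneg_nonneg)+
  then have "{a, b} = {Qzero, Qinf}"
    using a b Qset_nonzero[OF a] Qset_nonzero[OF b] Qset_fst_zero Qset_snd_zero
    by (cases a; cases b) (auto simp: Qzero_def Qinf_def zero_prod_def)
  then show False
    using assms by (auto simp: farey_mediant_def doubleton_eq_iff Qzero_def Qinf_def Qone_def)
qed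

text \<open>Away from \<open>1 = 0/1 \<oplus> 1/0\<close> one Farey parent dominates the other; this yields the labelling
  \<open>s\<^sub>1 = s\<^sub>0 \<oplus> s'\<close> used in the recursion for \<open>F\<close>.\<close>

lemma farey_mediant_dominates:
  assumes "farey_mediant \<sigma> a b" "\<sigma> \<noteq> Qone"
  shows "(fst a \<le> fst b \<and> snd a \<le> snd b) \<or> (fst b \<le> fst a \<and> snd b \<le> snd a)"
proof (rule ccontr)
  obtain qa pa qb pb where ab: "a = (qa, pa)" "b = (qb, pb)" by fastforce
  have nn: "0 \<le> qa" "0 \<le> pa" "0 \<le> qb" "0 \<le> pb" and det: "\<bar>qb * pa - qa * pb\<bar> = 1"
    using assms Qset_nonneg by (auto simp: farey_mediant_def ab orient_def)
  have inner: "1 \<le> qa * qb + pa * pb" using farey_mediant_pos_inner[OF assms] ab by simp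
  assume "\<not> ?thesis"
  then consider "qb + 1 \<le> qa" "pa + 1 \<le> pb" | "qa + 1 \<le> qb" "pb + 1 \<le> pa" using ab by auto
  then show False
  proof cases
    case 1
    have "(qb + 1) * (pa + 1) \<le> qa * pb" using 1 nn by (intro mult_mono) auto
    then have "qb = 0" "pa = 0" using nn det by (auto simp: algebra_simps)
    then show False using inner by simp
  next
    case 2
    have "(qa + 1) * (pb + 1) \<le> qb * pa" using 2 nn by (intro mult_mono) auto
    then have "qa = 0" "pb = 0" using nn det by (auto simp: algebra_simps)
    then show False using inner by simp
  qed
qed

lemma farey_mediant_diff:
  assumes "farey_mediant \<sigma> a b" "fst a \<le> fst b" "snd a \<le> snd b"
  shows "farey_mediant b a (b - a)"
proof -
  have det: "\<bar>fst a * snd (b - a) - fst (b - a) * snd a\<bar> = 1"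
    using assms(1) by (simp add: farey_mediant_def orient_def algebra_simps abs_minus_commute)
  moreover have "0 \<le> fst (b - a)" "0 \<le> snd (b - a)" using assms(2,3) by simp_all
  ultimately have "b - a \<in> Qset"
    using coprime_if_det_one(2)[OF det] by (cases "b - a") (simp add: Qset_iff)
  then show ?thesis
    using assms(1) det by (auto simp: farey_mediant_def orient_def algebra_simps abs_minus_commute)
qed

lemma farey_mediant_labelled_exists:
  assumes "\<sigma> \<in> Qset" "\<sigma> \<notin> {Qzero, Qone, Qinf}"
  obtains s0 s1 where "farey_mediant \<sigma> s0 s1" "farey_mediant s1 s0 (s1 - s0)"
proof -
  obtain a b where ab: "farey_mediant \<sigma> a b" using farey_mediant_exists assms by blast
  have "\<sigma> \<noteq> Qone" using assms by auto
  from farey_mediant_dominates[OF ab this] show thesis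
  proof
    assume "fst a \<le> fst b \<and> snd a \<le> snd b"
    then show thesis using that[OF ab] farey_mediant_diff[OF ab] by blast
  next
    assume "fst b \<le> fst a \<and> snd b \<le> snd a"
    then show thesis using that farey_mediant_commute[OF ab] farey_mediant_diff by blast
  qed
qed

section \<open>The Farey parents are the Farey neighbours with sum \<open>\<sigma>\<close>\<close>

text \<open>For \<open>a = q\<^sub>0/p\<^sub>0\<close>, \<open>b = q\<^sub>1/p\<^sub>1\<close> and \<open>n = x\<^sup>2 + y\<^sup>2\<close>, \<open>geod_poly a b x n = 0\<close> is the equation
  of the half circle (or vertical line) joining \<open>a\<close> and \<open>b\<close>.\<close>

definition geod_poly :: "int \<times> int \<Rightarrow> int \<times> int \<Rightarrow> real \<Rightarrow> real \<Rightarrow> real" where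
  "geod_poly a b x n = of_int (snd a * snd b) * n - of_int (fst a * snd b + fst b * snd a) * x
     + of_int (fst a * fst b)"

lemma cmod_eq_iff: "0 \<le> r \<Longrightarrow> cmod w = r \<longleftrightarrow> (Re w)\<^sup>2 + (Im w)\<^sup>2 = r\<^sup>2"
  by (metis cmod_power2 norm_ge_zero power2_eq_iff_nonneg)

lemma geod_iff:
  assumes "orient a b \<noteq> 0"
  shows "z \<in> geod a b \<longleftrightarrow> 0 < Im z \<and> geod_poly a b (Re z) ((Re z)\<^sup>2 + (Im z)\<^sup>2) = 0"
proof -
  obtain q0 p0 q1 p1 where ab: "a = (q0, p0)" "b = (q1, p1)" by fastforce
  have det: "q1 * p0 - q0 * p1 \<noteq> 0" using assms by (simp add: orient_def ab)
  consider "p0 = 0" | "p1 = 0" | "p0 \<noteq> 0" "p1 \<noteq> 0" by blast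
  then show ?thesis
  proof cases
    case 1
    then have "q0 \<noteq> 0" "p1 \<noteq> 0" using det by auto
    then have "Re z = of_int q1 / of_int p1 \<longleftrightarrow> of_int q0 * (of_int q1 - of_int p1 * Re z) = (0::real)"
      by (auto simp: field_simps)
    then show ?thesis using 1 by (simp add: geod_def geod_poly_def ab algebra_simps)
  next
    case 2
    then have "q1 \<noteq> 0" "p0 \<noteq> 0" using det by auto
    then have "Re z = of_int q0 / of_int p0 \<longleftrightarrow> of_int q1 * (of_int q0 - of_int p0 * Re z) = (0::real)"
      by (auto simp: field_simps)
    then show ?thesis using 2 \<open>p0 \<noteq> 0\<close> by (simp add: geod_def geod_poly_def ab algebra_simps)
  next
    case 3
    define x0 where "x0 = of_int q0 / (of_int p0 :: real)"
    define x1 where "x1 = of_int q1 / (of_int p1 :: real)"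
    have "cmod (z - complex_of_real ((x0 + x1) / 2)) = \<bar>x0 - x1\<bar> / 2 \<longleftrightarrow>
          (Re z - (x0 + x1) / 2)\<^sup>2 + (Im z)\<^sup>2 = (\<bar>x0 - x1\<bar> / 2)\<^sup>2"
      by (subst cmod_eq_iff) auto
    also have "\<dots> \<longleftrightarrow> (Re z)\<^sup>2 + (Im z)\<^sup>2 - (x0 + x1) * Re z + x0 * x1 = 0"
    proof -
      have "(Re z - (x0 + x1) / 2)\<^sup>2 + (Im z)\<^sup>2 - (\<bar>x0 - x1\<bar> / 2)\<^sup>2
          = (Re z)\<^sup>2 + (Im z)\<^sup>2 - (x0 + x1) * Re z + x0 * x1"
        by (simp add: power_divide power2_eq_square field_simps)
      then show ?thesis by (metis eq_iff_diff_eq_0)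
    qed
    also have "\<dots> \<longleftrightarrow> of_int (p0 * p1) * ((Re z)\<^sup>2 + (Im z)\<^sup>2 - (x0 + x1) * Re z + x0 * x1) = 0"
      using 3 by simp
    also have "of_int (p0 * p1) * ((Re z)\<^sup>2 + (Im z)\<^sup>2 - (x0 + x1) * Re z + x0 * x1)
        = geod_poly a b (Re z) ((Re z)\<^sup>2 + (Im z)\<^sup>2)"
      using 3 by (simp add: x0_def x1_def geod_poly_def ab field_simps)
    finally show ?thesis using 3 by (simp add: geod_def ab x0_def x1_def)
  qed
qed

text \<open>\<open>L\<^sub>\<sigma>\<close> is the part with \<open>Re z \<ge> 0\<close> of the geodesic from \<open>\<sigma> = q/p\<close> to \<open>-1/\<sigma> = -p/q\<close>.\<close>

lemma Lgeo_iff: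
  assumes "1 \<le> q" "1 \<le> p"
  shows "z \<in> Lgeo (q, p) \<longleftrightarrow>
    0 < Im z \<and> 0 \<le> Re z \<and> geod_poly (q, p) (-p, q) (Re z) ((Re z)\<^sup>2 + (Im z)\<^sup>2) = 0"
proof -
  define x where "x = of_int q / (of_int p :: real)"
  define c where "c = (x\<^sup>2 - 1) / (2 * x)"
  have "x > 0" using assms by (simp add: x_def)
  have "cmod (z - complex_of_real c) = cmod (\<i> - complex_of_real c) \<longleftrightarrow>
        (Re z - c)\<^sup>2 + (Im z)\<^sup>2 = (cmod (\<i> - complex_of_real c))\<^sup>2"
    by (subst cmod_eq_iff) auto
  also have "(cmod (\<i> - complex_of_real c))\<^sup>2 = c\<^sup>2 + 1"
    by (simp add: cmod_def power2_eq_square)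
  also have "(Re z - c)\<^sup>2 + (Im z)\<^sup>2 = c\<^sup>2 + 1 \<longleftrightarrow> (Re z)\<^sup>2 + (Im z)\<^sup>2 - 2 * c * Re z - 1 = 0"
    by (simp add: power2_eq_square algebra_simps)
  also have "\<dots> \<longleftrightarrow> of_int (p * q) * ((Re z)\<^sup>2 + (Im z)\<^sup>2 - 2 * c * Re z - 1) = 0"
    using assms by simp
  also have "of_int (p * q) * ((Re z)\<^sup>2 + (Im z)\<^sup>2 - 2 * c * Re z - 1)
      = geod_poly (q, p) (-p, q) (Re z) ((Re z)\<^sup>2 + (Im z)\<^sup>2)"
    using assms \<open>x > 0\<close> by (simp add: geod_poly_def c_def x_def field_simps power2_eq_square)
  finally show ?thesis by (simp add: Lgeo_def Let_def x_def c_def) blast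
qed

text \<open>Eliminating \<open>n = \<bar>z\<bar>\<^sup>2\<close> between the equations of \<open>L\<^sub>\<sigma>\<close> and of the geodesic from \<open>v\<close> to \<open>w\<close>
  leaves a linear equation for \<open>x = Re z\<close>.\<close>

lemma geod_poly_elim:
  "of_int (p * q) * geod_poly v w x n - of_int (snd v * snd w) * geod_poly (q, p) (-p, q) x n
   = of_int ((q * snd v - p * fst v) * (q * snd w - p * fst w)
             - p * p * (snd v * snd w + fst v * fst w)) * x
     + of_int (p * q * (snd v * snd w + fst v * fst w))"
  by (simp add: geod_poly_def algebra_simps)

definition parents_crossing_re :: "int \<times> int \<Rightarrow> int \<times> int \<Rightarrow> int \<times> int \<Rightarrow> real" where
  "parents_crossing_re \<sigma> a b = (let c = fst a * fst b + snd a * snd b in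
     of_int (snd \<sigma> * fst \<sigma> * c) / of_int (snd \<sigma> * snd \<sigma> * c + 1))"

lemma geod_poly_parents:
  assumes ab: "farey_mediant (q, p) a b" and L: "geod_poly (q, p) (-p, q) x n = 0"
  defines "C \<equiv> fst a * fst b + snd a * snd b"
  shows "of_int (p * q) * geod_poly a b x n = of_int (p * q * C) - x * of_int (p * p * C + 1)"
proof -
  have sums: "q = fst a + fst b" "p = snd a + snd b" and "\<bar>orient a b\<bar> = 1"
    using ab by (auto simp: farey_mediant_def prod_eq_iff)
  then have "orient a b * orient a b = 1" by (metis abs_mult_self_eq mult_1)
  moreover have "q * snd a - p * fst a = orient a b" "q * snd b - p * fst b = - orient a b"
    unfolding sums orient_def by (simp_all add: algebra_simps)
  ultimately have "(q * snd a - p * fst a) * (q * snd b - p * fst b) = -1" by simp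
  then have ES: "(q * snd a - p * fst a) * (q * snd b - p * fst b)
      - p * p * (snd a * snd b + fst a * fst b) = - (p * p * C + 1)" "p * q * (snd a * snd b + fst a * fst b) = p * q * C"
    by (simp_all add: C_def algebra_simps)
  have "of_int (p * q) * geod_poly a b x n = of_int (- (p * p * C + 1)) * x + of_int (p * q * C)"
    using geod_poly_elim[of p q a b x n] unfolding L ES by simp
  then show ?thesis by (simp add: algebra_simps)
qed

lemma Lgeo_meets_geod:
  assumes ab: "farey_mediant \<sigma> a b" and "\<sigma> \<noteq> Qone"
  obtains z where "z \<in> Lgeo \<sigma>" "z \<in> geod a b" "Re z = parents_crossing_re \<sigma> a b"
proof -
  obtain q p where \<sigma>: "\<sigma> = (q, p)" by fastforce
  have qp: "1 \<le> q" "1 \<le> p" using farey_mediant_ge_one[OF ab] \<sigma> by auto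
  define C where "C = fst a * fst b + snd a * snd b"
  have C: "1 \<le> C" using farey_mediant_pos_inner[OF assms] by (simp add: C_def)
  define X where "X = of_int (p * q * C) / (of_int (p * p * C + 1) :: real)"
  have den: "(0::real) < of_int (p * p * C + 1)" using qp C by (simp add: add_pos_nonneg)
  have X: "X * of_int (p * p * C + 1) = of_int (p * q * C)" "0 \<le> X"
    using den qp C by (simp_all add: X_def)
  have pq: "(0::real) < of_int (p * q)" using qp by simp
  define N where "N = (of_int (q * q - p * p) * X + of_int (p * q)) / of_int (p * q)"
  have Nq: "of_int (p * q) * N = of_int (q * q - p * p) * X + of_int (p * q)"
    using pq unfolding N_def by (metis less_irrefl nonzero_mult_div_cancel_left times_divide_eq_right)
  then have L: "geod_poly (q, p) (-p, q) X N = 0"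
    by (simp add: geod_poly_def algebra_simps)
  have "of_int p * X * of_int (p * p * C + 1) = of_int p * of_int (p * q * C)"
    using X(1) by (metis mult.assoc)
  also have "\<dots> < of_int q * of_int (p * p * C + 1)"
    using qp by (simp add: algebra_simps)
  finally have pX: "of_int p * X < of_int q" using den by simp
  have "of_int (p * q) * (N - X\<^sup>2) = (of_int q - of_int p * X) * (of_int q * X + of_int p)"
    unfolding right_diff_distrib Nq by (simp add: algebra_simps power2_eq_square)
  moreover have "0 < (of_int q - of_int p * X) * (of_int q * X + of_int p)"
    using pX qp X(2) by (intro mult_pos_pos) (auto simp: add_nonneg_pos)
  ultimately have "0 < of_int (p * q) * (N - X\<^sup>2)" by simp
  then have NX: "X\<^sup>2 < N" using pq by (metis diff_gt_0_iff_gt zero_less_mult_pos)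
  define z where "z = Complex X (sqrt (N - X\<^sup>2))"
  have z: "Re z = X" "0 < Im z" "(Re z)\<^sup>2 + (Im z)\<^sup>2 = N" using NX by (simp_all add: z_def)
  have zL: "z \<in> Lgeo \<sigma>" unfolding \<sigma> Lgeo_iff[OF qp] using z L X(2) by simp
  have "geod_poly a b X N = 0"
    using geod_poly_parents[OF ab[unfolded \<sigma>] L] X(1) qp by (simp add: C_def mult.commute)
  moreover have "orient a b \<noteq> 0" using ab by (auto simp: farey_mediant_def)
  ultimately have zG: "z \<in> geod a b" using z by (simp add: geod_iff)
  have "Re z = parents_crossing_re \<sigma> a b"
    using z by (simp add: parents_crossing_re_def X_def \<sigma> C_def Let_def mult.commute)
  then show thesis by (rule that[OF zL zG])
qed

lemma unimodular_nonneg_prod: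
  fixes x y z w :: int
  assumes "\<bar>x * w - y * z\<bar> = 1"
  shows "0 \<le> x * y * z * w"
proof (rule ccontr)
  assume "\<not> ?thesis"
  then have "(x * w) * (y * z) < 0" by (simp add: algebra_simps)
  then have "0 < x * w \<and> y * z < 0 \<or> x * w < 0 \<and> 0 < y * z" by (simp add: mult_less_0_iff)
  then show False using assms by linarith
qed

lemma lin_comb_zero_no_unit_gap:
  fixes x y P Q :: int
  assumes "x * P + y * Q = 0" "0 < P" "0 < Q"
  shows "\<bar>x - y\<bar> \<noteq> 1"
proof -
  have "0 < x \<longleftrightarrow> y < 0" "x < 0 \<longleftrightarrow> 0 < y"
    using assms by (smt (verit) mult_pos_pos mult_neg_pos mult_nonneg_nonneg mult_nonpos_nonneg)+
  then show ?thesis by auto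
qed

text \<open>The arithmetic core of the uniqueness of the first Farey edge crossed by \<open>L\<^sub>\<sigma>\<close>: here
  \<open>(\<alpha>, \<beta>)\<close> and \<open>(\<gamma>, \<delta>)\<close> are the coordinates of the ends of a Farey edge in the basis of
  the parents of \<open>\<sigma>\<close>, \<open>A\<close>, \<open>B\<close>, \<open>C\<close> the Gram matrix of that basis.\<close>

lemma crossing_coeffs_E_nonzero:
  fixes \<alpha> \<beta> \<gamma> \<delta> A B C S :: int
  assumes det: "\<bar>\<alpha> * \<delta> - \<beta> * \<gamma>\<bar> = 1" and A: "1 \<le> A" and B: "1 \<le> B" and C: "0 \<le> C"
    and S: "S = \<alpha> * \<gamma> * A + (\<alpha> * \<delta> + \<beta> * \<gamma>) * C + \<beta> * \<delta> * B"
    and E0: "(\<alpha> - \<beta>) * (\<gamma> - \<delta>) = 0 \<longrightarrow> S = 0"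
  shows "(\<alpha> - \<beta>) * (\<gamma> - \<delta>) \<noteq> 0"
proof
  assume E: "(\<alpha> - \<beta>) * (\<gamma> - \<delta>) = 0"
  have "S + C * ((\<alpha> - \<beta>) * (\<gamma> - \<delta>)) = \<alpha> * \<gamma> * (A + C) + \<beta> * \<delta> * (B + C)"
    by (simp add: S algebra_simps)
  then have key: "\<alpha> * \<gamma> * (A + C) + \<beta> * \<delta> * (B + C) = 0" using E E0 by simp
  from E consider "\<alpha> = \<beta>" | "\<gamma> = \<delta>" by auto
  then show False
  proof cases
    case 1
    then have "\<alpha> * (\<gamma> * (A + C) + \<delta> * (B + C)) = 0" "\<bar>\<alpha> * (\<delta> - \<gamma>)\<bar> = 1"
      using key det by (simp_all add: algebra_simps)
    then have "\<gamma> * (A + C) + \<delta> * (B + C) = 0" "\<bar>\<gamma> - \<delta>\<bar> = 1"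
      by (auto simp: abs_mult zmult_eq_1_iff abs_minus_commute)
    with lin_comb_zero_no_unit_gap show False using A B C by force
  next
    case 2
    then have "\<gamma> * (\<alpha> * (A + C) + \<beta> * (B + C)) = 0" "\<bar>\<gamma> * (\<alpha> - \<beta>)\<bar> = 1"
      using key det by (simp_all add: algebra_simps)
    then have "\<alpha> * (A + C) + \<beta> * (B + C) = 0" "\<bar>\<alpha> - \<beta>\<bar> = 1"
      by (auto simp: abs_mult zmult_eq_1_iff)
    with lin_comb_zero_no_unit_gap show False using A B C by force
  qed
qed

lemma crossing_coeffs_degenerate:
  fixes \<alpha> \<beta> \<gamma> \<delta> A B C E S :: int
  assumes det: "\<bar>\<alpha> * \<delta> - \<beta> * \<gamma>\<bar> = 1" and A: "1 \<le> A" and B: "1 \<le> B" and C: "0 \<le> C"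
    and E: "E = (\<alpha> - \<beta>) * (\<gamma> - \<delta>)"
    and S: "S = \<alpha> * \<gamma> * A + (\<alpha> * \<delta> + \<beta> * \<gamma>) * C + \<beta> * \<delta> * B"
    and ES: "E * S \<le> 0" and CE: "C * \<bar>E\<bar> \<le> \<bar>S\<bar>" and E0: "E = 0 \<longrightarrow> S = 0"
  shows "\<alpha> * \<gamma> = 0 \<and> \<beta> * \<delta> = 0"
proof -
  have "E \<noteq> 0" using crossing_coeffs_E_nonzero[OF det A B C S] E E0 by simp
  have "\<bar>(\<alpha> - \<beta>) * \<delta> - \<beta> * (\<gamma> - \<delta>)\<bar> = 1" "\<bar>\<alpha> * (\<delta> - \<gamma>) - (\<beta> - \<alpha>) * \<gamma>\<bar> = 1"
    using det by (simp_all add: algebra_simps)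
  then have "0 \<le> E * (\<alpha> * \<gamma>)" "0 \<le> E * (\<beta> * \<delta>)"
    using unimodular_nonneg_prod unfolding E by (fastforce simp: algebra_simps)+
  then have ge: "0 \<le> E * (\<alpha> * \<gamma>) * (A + C)" "0 \<le> E * (\<beta> * \<delta>) * (B + C)"
    using A B C by simp_all
  have "C * \<bar>E\<bar> * \<bar>E\<bar> \<le> \<bar>S\<bar> * \<bar>E\<bar>" using CE by (simp add: mult_right_mono)
  moreover have "E * S = - (\<bar>S\<bar> * \<bar>E\<bar>)"
    using ES by (simp add: abs_mult[symmetric] abs_of_nonpos mult.commute)
  ultimately have "E * (S + C * E) \<le> 0" by (simp add: algebra_simps abs_mult_self_eq)
  moreover have "E * (S + C * E) = E * (\<alpha> * \<gamma>) * (A + C) + E * (\<beta> * \<delta>) * (B + C)"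
    by (simp add: E S algebra_simps)
  ultimately have "E * (\<alpha> * \<gamma>) * (A + C) = 0" "E * (\<beta> * \<delta>) * (B + C) = 0"
    using ge by linarith+
  then show ?thesis using \<open>E \<noteq> 0\<close> A B C by simp
qed

text \<open>With \<open>t = q - p Re z > 0\<close>, the elimination reads \<open>E Re z = -p S t\<close>, and the hypothesis
  \<open>beyond\<close> says \<open>Re z \<ge> p C t\<close>.\<close>

lemma Lgeo_crossing_constraints:
  fixes q p C :: int
  assumes qp: "1 \<le> q" "1 \<le> p" and C: "1 \<le> C"
    and zL: "z \<in> Lgeo (q, p)" and zG: "z \<in> geod v w" and vw: "orient v w \<noteq> 0"
    and beyond: "of_int (p * q * C) \<le> Re z * of_int (p * p * C + 1)"
  defines "E \<equiv> (q * snd v - p * fst v) * (q * snd w - p * fst w)"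
    and "S \<equiv> snd v * snd w + fst v * fst w"
  shows "E * S \<le> 0" "C * \<bar>E\<bar> \<le> \<bar>S\<bar>" "E = 0 \<longrightarrow> S = 0"
proof -
  define X where "X = Re z"
  define N where "N = (Re z)\<^sup>2 + (Im z)\<^sup>2"
  have L: "geod_poly (q, p) (-p, q) X N = 0" and X: "0 \<le> X" and Y: "0 < Im z"
    using zL unfolding Lgeo_iff[OF qp] X_def N_def by auto
  have G: "geod_poly v w X N = 0" using zG vw unfolding geod_iff[OF vw] X_def N_def by auto
  have rp: "(0::real) < of_int p" "(0::real) < of_int q" using qp by auto
  have "of_int (E - p * p * S) * X + of_int (p * q * S) = 0"
    using geod_poly_elim[of p q v w X N] unfolding L G E_def S_def by simp
  then have EX: "of_int E * X = - of_int p * of_int S * (of_int q - of_int p * X)"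
    by (simp add: algebra_simps)
  have "(of_int p * X - of_int q) * (of_int q * X + of_int p) = - of_int (p * q) * (Im z)\<^sup>2"
    using L by (simp add: geod_poly_def N_def X_def algebra_simps power2_eq_square)
  also have "\<dots> < 0" using rp Y by simp
  finally have "of_int p * X < of_int q"
    using rp X by (smt (verit) mult_nonneg_nonneg mult_pos_pos)
  then obtain t where t: "t = of_int q - of_int p * X" "0 < t" by simp
  have Xt: "of_int p * of_int C * t \<le> X" using beyond unfolding t(1) by (simp add: X_def algebra_simps)
  have "0 < of_int p * of_int C * t" using rp C t by simp
  then have Xpos: "0 < X" using Xt by linarith
  have EXt: "of_int E * X = - of_int p * of_int S * t" using EX t(1) by simp
  have "of_int (E * S) * X = (of_int E * X) * of_int S" by (simp add: algebra_simps)
  also have "\<dots> = - of_int p * (of_int S)\<^sup>2 * t"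
    unfolding EXt by (simp add: power2_eq_square algebra_simps)
  also have "\<dots> \<le> 0" using rp t by simp
  finally show "E * S \<le> 0" using Xpos by (simp add: mult_le_0_iff)
  have absEX: "\<bar>of_int E\<bar> * X = of_int p * \<bar>of_int S\<bar> * t"
    using arg_cong[OF EXt, of abs] Xpos rp t by (simp add: abs_mult)
  have "\<bar>of_int E\<bar> * (of_int p * of_int C * t) \<le> \<bar>of_int E\<bar> * X"
    using Xt by (simp add: mult_left_mono)
  then have "(of_int C * \<bar>of_int E\<bar>) * (of_int p * t) \<le> \<bar>of_int S\<bar> * (of_int p * t)"
    using absEX by (simp add: algebra_simps)
  then have "of_int C * \<bar>of_int E\<bar> \<le> (\<bar>of_int S\<bar> :: real)" using rp t by simp
  then show "C * \<bar>E\<bar> \<le> \<bar>S\<bar>" by (metis of_int_abs of_int_le_iff of_int_mult)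
  show "E = 0 \<longrightarrow> S = 0" using EXt rp t by auto
qed

lemma farey_nbr_iff: "farey_nbr a b \<longleftrightarrow> \<bar>orient a b\<bar> = 1"
  by (cases a, cases b) (simp add: farey_nbr_def orient_def abs_minus_commute)

lemma unimodular_coords:
  fixes q0 p0 q1 p1 x y :: int
  assumes "\<bar>q0 * p1 - q1 * p0\<bar> = 1"
  obtains \<alpha> \<beta> where "x = \<alpha> * q0 + \<beta> * q1" "y = \<alpha> * p0 + \<beta> * p1"
proof -
  define d where "d = q0 * p1 - q1 * p0"
  have "d * d = 1" using assms by (metis abs_mult_self_eq d_def mult_1)
  moreover have "(d * (x * p1 - q1 * y)) * q0 + (d * (q0 * y - x * p0)) * q1 = x * (d * d)"
    "(d * (x * p1 - q1 * y)) * p0 + (d * (q0 * y - x * p0)) * p1 = y * (d * d)"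
    by (simp_all add: d_def algebra_simps)
  ultimately have "x = (d * (x * p1 - q1 * y)) * q0 + (d * (q0 * y - x * p0)) * q1"
    "y = (d * (x * p1 - q1 * y)) * p0 + (d * (q0 * y - x * p0)) * p1"
    by simp_all
  then show thesis by (rule that)
qed

lemma Qset_norm_ge_one: "a \<in> Qset \<Longrightarrow> 1 \<le> fst a * fst a + snd a * snd a"
proof -
  assume a: "a \<in> Qset"
  have "0 < fst a * fst a \<or> 0 < snd a * snd a"
    using Qset_nonzero[OF a] by (cases a) (auto simp: zero_prod_def zero_less_mult_iff linorder_neq_iff)
  then show ?thesis by (smt (verit) zero_le_square)
qed

lemma farey_edge_coords:
  assumes ab: "farey_mediant (q, p) a b" and vw: "farey_nbr v w"
  obtains \<alpha> \<beta> \<gamma> \<delta> :: int where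
    "v = (\<alpha> * fst a + \<beta> * fst b, \<alpha> * snd a + \<beta> * snd b)"
    "w = (\<gamma> * fst a + \<delta> * fst b, \<gamma> * snd a + \<delta> * snd b)"
    "\<bar>\<alpha> * \<delta> - \<beta> * \<gamma>\<bar> = 1"
    "(q * snd v - p * fst v) * (q * snd w - p * fst w) = (\<alpha> - \<beta>) * (\<gamma> - \<delta>)"
    "snd v * snd w + fst v * fst w = \<alpha> * \<gamma> * (fst a * fst a + snd a * snd a)
       + (\<alpha> * \<delta> + \<beta> * \<gamma>) * (fst a * fst b + snd a * snd b) + \<beta> * \<delta> * (fst b * fst b + snd b * snd b)"
proof -
  obtain q0 p0 q1 p1 where a: "a = (q0, p0)" and b: "b = (q1, p1)" by fastforce
  have qp: "q = q0 + q1" "p = p0 + p1" using ab by (auto simp: farey_mediant_def a b)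
  define d where "d = q0 * p1 - q1 * p0"
  have d: "\<bar>d\<bar> = 1" using ab by (simp add: farey_mediant_def orient_def a b d_def abs_minus_commute)
  then have dd: "d * d = 1" by (metis abs_mult_self_eq mult_1)
  obtain \<alpha> \<beta> where v: "v = (\<alpha> * q0 + \<beta> * q1, \<alpha> * p0 + \<beta> * p1)"
    using unimodular_coords[OF d[unfolded d_def]] by (metis prod.collapse)
  obtain \<gamma> \<delta> where w: "w = (\<gamma> * q0 + \<delta> * q1, \<gamma> * p0 + \<delta> * p1)"
    using unimodular_coords[OF d[unfolded d_def]] by (metis prod.collapse)
  have "orient v w = (\<beta> * \<gamma> - \<alpha> * \<delta>) * d" by (simp add: orient_def v w d_def algebra_simps)
  then have det: "\<bar>\<alpha> * \<delta> - \<beta> * \<gamma>\<bar> = 1"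
    using vw d by (auto simp: farey_nbr_iff abs_mult abs_minus_commute)
  have "(q * snd v - p * fst v) * (q * snd w - p * fst w) = (\<alpha> - \<beta>) * (\<gamma> - \<delta>) * (d * d)"
    by (simp add: v w qp d_def algebra_simps)
  then show thesis
    using that[of \<alpha> \<beta> \<gamma> \<delta>] det dd by (simp add: v w a b algebra_simps)
qed

lemma farey_edge_beyond_crossing:
  assumes ab: "farey_mediant \<sigma> a b" and \<sigma>: "\<sigma> \<noteq> Qone"
    and vw: "farey_nbr v w" and zL: "z \<in> Lgeo \<sigma>" and zG: "z \<in> geod v w"
    and beyond: "parents_crossing_re \<sigma> a b \<le> Re z"
  obtains e e' :: int where "\<bar>e\<bar> = 1" "\<bar>e'\<bar> = 1"
    "v = (e * fst a, e * snd a) \<and> w = (e' * fst b, e' * snd b) \<or>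
     v = (e * fst b, e * snd b) \<and> w = (e' * fst a, e' * snd a)"
proof -
  obtain q p where \<sigma>_eq: "\<sigma> = (q, p)" by fastforce
  have qp: "1 \<le> q" "1 \<le> p" using farey_mediant_ge_one[OF ab] \<sigma>_eq by auto
  define C where "C = fst a * fst b + snd a * snd b"
  have C: "1 \<le> C" using farey_mediant_pos_inner[OF ab \<sigma>] by (simp add: C_def)
  have "(0::real) < of_int (p * p * C + 1)" using qp C by (simp add: add_pos_nonneg)
  then have beyond': "of_int (p * q * C) \<le> Re z * of_int (p * p * C + 1)"
    using beyond by (simp add: parents_crossing_re_def \<sigma>_eq C_def Let_def mult.commute divide_le_eq)
  have "orient v w \<noteq> 0" using vw by (auto simp: farey_nbr_iff)
  note constraints = Lgeo_crossing_constraints[OF qp C zL[unfolded \<sigma>_eq] zG this beyond']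
  obtain \<alpha> \<beta> \<gamma> \<delta> where v: "v = (\<alpha> * fst a + \<beta> * fst b, \<alpha> * snd a + \<beta> * snd b)"
    and w: "w = (\<gamma> * fst a + \<delta> * fst b, \<gamma> * snd a + \<delta> * snd b)"
    and coords: "\<bar>\<alpha> * \<delta> - \<beta> * \<gamma>\<bar> = 1"
      "(q * snd v - p * fst v) * (q * snd w - p * fst w) = (\<alpha> - \<beta>) * (\<gamma> - \<delta>)"
      "snd v * snd w + fst v * fst w = \<alpha> * \<gamma> * (fst a * fst a + snd a * snd a)
         + (\<alpha> * \<delta> + \<beta> * \<gamma>) * C + \<beta> * \<delta> * (fst b * fst b + snd b * snd b)"
    using farey_edge_coords[OF ab[unfolded \<sigma>_eq] vw] unfolding C_def by blast
  have "a \<in> Qset" "b \<in> Qset" using ab by (auto simp: farey_mediant_def)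
  then have "\<alpha> * \<gamma> = 0 \<and> \<beta> * \<delta> = 0"
    using crossing_coeffs_degenerate[OF coords(1) Qset_norm_ge_one Qset_norm_ge_one _ coords(2,3)]
      constraints C by simp
  then consider "\<alpha> = 0" "\<delta> = 0" "\<bar>\<beta>\<bar> = 1" "\<bar>\<gamma>\<bar> = 1" | "\<beta> = 0" "\<gamma> = 0" "\<bar>\<alpha>\<bar> = 1" "\<bar>\<delta>\<bar> = 1"
    using coords(1) by (auto simp: abs_mult zmult_eq_1_iff)
  then show thesis
  proof cases
    case 1
    then show thesis using that[of \<beta> \<gamma>] by (simp add: v w)
  next
    case 2
    then show thesis using that[of \<alpha> \<delta>] by (simp add: v w)
  qed
qed

lemma geod_unit_smult:
  assumes "\<bar>e\<bar> = 1" "\<bar>e'\<bar> = 1" "orient a b \<noteq> 0"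
  shows "geod (e * fst a, e * snd a) (e' * fst b, e' * snd b) = geod a b"
proof -
  let ?a = "(e * fst a, e * snd a)" and ?b = "(e' * fst b, e' * snd b)"
  have "e * e' \<noteq> 0" using assms by auto
  moreover have "orient ?a ?b = e * e' * orient a b" by (simp add: orient_def algebra_simps)
  moreover have "geod_poly ?a ?b x n = of_int (e * e') * geod_poly a b x n" for x n
    by (simp add: geod_poly_def algebra_simps)
  ultimately show ?thesis using assms(3) by (auto simp: geod_iff)
qed

lemma geod_commute:
  assumes "orient a b \<noteq> 0"
  shows "geod b a = geod a b"
proof -
  have "orient b a \<noteq> 0" using assms orient_commute[of b a] by simp
  moreover have "geod_poly b a x n = geod_poly a b x n" for x n
    by (simp add: geod_poly_def mult.commute add.commute)
  ultimately show ?thesis using assms by (auto simp: geod_iff)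
qed

lemma first_edge_if_farey_mediant:
  assumes ab: "farey_mediant \<sigma> a b" and \<sigma>: "\<sigma> \<noteq> Qone"
  shows "first_edge \<sigma> a b"
proof -
  have ori: "orient a b \<noteq> 0" using ab by (auto simp: farey_mediant_def)
  obtain z where z: "z \<in> Lgeo \<sigma>" "z \<in> geod a b" "Re z = parents_crossing_re \<sigma> a b"
    using Lgeo_meets_geod[OF ab \<sigma>] by blast
  have "Re z' < Re z"
    if vw: "farey_nbr v w" and ne: "geod v w \<noteq> geod a b" and z': "z' \<in> Lgeo \<sigma> \<inter> geod v w"
    for v w z'
  proof (rule ccontr)
    assume "\<not> Re z' < Re z"
    then have "parents_crossing_re \<sigma> a b \<le> Re z'" using z(3) by simp
    moreover have "z' \<in> Lgeo \<sigma>" "z' \<in> geod v w" using z' by auto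
    ultimately obtain e e' where "\<bar>e\<bar> = 1" "\<bar>e'\<bar> = 1"
      "v = (e * fst a, e * snd a) \<and> w = (e' * fst b, e' * snd b) \<or>
       v = (e * fst b, e * snd b) \<and> w = (e' * fst a, e' * snd a)"
      using farey_edge_beyond_crossing[OF ab \<sigma> vw] by blast
    then have "geod v w = geod a b"
      using geod_unit_smult ori geod_commute[OF ori] orient_commute[of a b] by auto
    then show False using ne by simp
  qed
  then have "\<forall>v w z'. farey_nbr v w \<and> geod v w \<noteq> geod a b \<and> z' \<in> Lgeo \<sigma> \<inter> geod v w
      \<longrightarrow> Re z' < Re z" by blast
  moreover have "a \<in> Qset" "b \<in> Qset" "farey_nbr a b"
    using ab by (auto simp: farey_mediant_def farey_nbr_iff)
  ultimately show ?thesis unfolding first_edge_def using z by blast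
qed

lemma Qset_unit_multiple:
  assumes "a \<in> Qset" "c \<in> Qset" "\<bar>e\<bar> = 1" "a = (e * fst c, e * snd c)"
  shows "a = c"
proof -
  have "e = 1 \<or> e = -1" using assms(3) by auto
  moreover have "\<not> (0 \<le> - fst c \<and> 0 \<le> - snd c)"
    using Qset_nonneg[OF assms(2)] Qset_nonzero[OF assms(2)] by (cases c) (auto simp: zero_prod_def)
  ultimately show ?thesis using assms(4) Qset_nonneg[OF assms(1)] by auto
qed

lemma farey_mediant_if_first_edge:
  assumes \<sigma>: "\<sigma> \<in> Qset" "\<sigma> \<notin> {Qzero, Qone, Qinf}" and fe: "first_edge \<sigma> a b"
  shows "farey_mediant \<sigma> a b"
proof -
  obtain a0 b0 where ab0: "farey_mediant \<sigma> a0 b0" using farey_mediant_exists \<sigma> by blast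
  have \<sigma>1: "\<sigma> \<noteq> Qone" using \<sigma> by simp
  obtain z0 where z0: "z0 \<in> Lgeo \<sigma>" "z0 \<in> geod a0 b0" "Re z0 = parents_crossing_re \<sigma> a0 b0"
    using Lgeo_meets_geod[OF ab0 \<sigma>1] by blast
  have Q: "a \<in> Qset" "b \<in> Qset" and ab: "farey_nbr a b" using fe by (auto simp: first_edge_def)
  obtain z where z: "z \<in> Lgeo \<sigma>" "z \<in> geod a b"
    and first: "\<And>v w z'. farey_nbr v w \<Longrightarrow> geod v w \<noteq> geod a b \<Longrightarrow> z' \<in> Lgeo \<sigma> \<inter> geod v w
       \<Longrightarrow> Re z' < Re z"
    using fe unfolding first_edge_def by blast
  have "farey_nbr a0 b0" using ab0 by (simp add: farey_mediant_def farey_nbr_iff)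
  then obtain z' where z': "z' \<in> Lgeo \<sigma>" "z' \<in> geod a b" "parents_crossing_re \<sigma> a0 b0 \<le> Re z'"
    using first[of a0 b0 z0] z z0 by (cases "geod a0 b0 = geod a b") (auto intro: less_imp_le)
  obtain e e' where e: "\<bar>e\<bar> = 1" "\<bar>e'\<bar> = 1"
    "a = (e * fst a0, e * snd a0) \<and> b = (e' * fst b0, e' * snd b0) \<or>
     a = (e * fst b0, e * snd b0) \<and> b = (e' * fst a0, e' * snd a0)"
    using farey_edge_beyond_crossing[OF ab0 \<sigma>1 ab z'] by blast
  have Q0: "a0 \<in> Qset" "b0 \<in> Qset" using ab0 by (auto simp: farey_mediant_def)
  from e(3) show ?thesis
  proof
    assume "a = (e * fst a0, e * snd a0) \<and> b = (e' * fst b0, e' * snd b0)"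
    then have "a = a0" "b = b0" using Qset_unit_multiple Q Q0 e(1,2) by blast+
    then show ?thesis using ab0 by simp
  next
    assume "a = (e * fst b0, e * snd b0) \<and> b = (e' * fst a0, e' * snd a0)"
    then have "a = b0" "b = a0" using Qset_unit_multiple Q Q0 e(1,2) by blast+
    then show ?thesis using farey_mediant_commute[OF ab0] by simp
  qed
qed

lemma is_parents_iff_farey_mediant:
  assumes "\<sigma> \<in> Qset"
  shows "is_parents \<sigma> a b \<longleftrightarrow> farey_mediant \<sigma> a b"
proof (cases "\<sigma> = Qone")
  case True
  then show ?thesis by (simp add: is_parents_def farey_mediant_Qone_iff)
next
  case False
  show ?thesis
  proof
    assume "is_parents \<sigma> a b"
    then have "\<sigma> \<notin> {Qzero, Qone, Qinf}" "first_edge \<sigma> a b" using False by (auto simp: is_parents_def)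
    then show "farey_mediant \<sigma> a b" using farey_mediant_if_first_edge assms by blast
  next
    assume ab: "farey_mediant \<sigma> a b"
    then have "\<sigma> \<notin> {Qzero, Qone, Qinf}" using False farey_mediant_not_Qzero_Qinf by blast
    then show "is_parents \<sigma> a b"
      using first_edge_if_farey_mediant[OF ab False] assms by (simp add: is_parents_def)
  qed
qed

section \<open>The system \<open>F\<close> is well defined\<close>

lemma farey_induct[consumes 1, case_names base step]:
  assumes "\<sigma> \<in> Qset"
    and base: "\<And>\<sigma>. \<sigma> \<in> {Qzero, Qone, Qinf} \<Longrightarrow> P \<sigma>"
    and step: "\<And>\<sigma> s0 s1. \<sigma> \<in> Qset \<Longrightarrow> \<sigma> \<notin> {Qzero, Qone, Qinf} \<Longrightarrow>
       farey_mediant \<sigma> s0 s1 \<Longrightarrow> farey_mediant s1 s0 (s1 - s0) \<Longrightarrow>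
       P s0 \<Longrightarrow> P s1 \<Longrightarrow> P (s1 - s0) \<Longrightarrow> P \<sigma>"
  shows "P \<sigma>"
  using assms(1)
proof (induction "nat (fst \<sigma> + snd \<sigma>)" arbitrary: \<sigma> rule: less_induct)
  case less
  show ?case
  proof (cases "\<sigma> \<in> {Qzero, Qone, Qinf}")
    case True
    then show ?thesis by (rule base)
  next
    case False
    obtain s0 s1 where d: "farey_mediant \<sigma> s0 s1" "farey_mediant s1 s0 (s1 - s0)"
      using farey_mediant_labelled_exists[OF less.prems False] by blast
    have Q: "s0 \<in> Qset" "s1 \<in> Qset" "s1 - s0 \<in> Qset" using d by (auto simp: farey_mediant_def)
    have IH: "P s" if "s \<in> Qset" "fst s + snd s < fst \<sigma> + snd \<sigma>" for s
      using less.hyps[of s] that Qset_nonneg[of s] by simp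
    have "P s0" "P s1" using IH Q farey_mediant_less[OF d(1)] by simp_all
    moreover have "P (s1 - s0)"
      using IH Q farey_mediant_less[OF d(1)] farey_mediant_less[OF d(2)] by simp
    ultimately show ?thesis using step[OF less.prems False d] by blast
  qed
qed

lemma is_parents_Qset: "is_parents \<sigma> a b \<Longrightarrow> a \<in> Qset \<and> b \<in> Qset"
  unfolding is_parents_def first_edge_def using Qset_base by (auto simp: doubleton_eq_iff)

lemma farey_mediant_asym: "farey_mediant a b c \<Longrightarrow> farey_mediant b a d \<Longrightarrow> False"
proof -
  assume "farey_mediant a b c" "farey_mediant b a d"
  then have "b + c = a" "a + d = b" "c \<in> Qset" "d \<in> Qset" by (auto simp: farey_mediant_def)
  then have "c + d = 0" "0 \<le> fst c" "0 \<le> snd c" "0 \<le> fst d" "0 \<le> snd d" "c \<noteq> 0"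
    using Qset_nonneg Qset_nonzero by (auto simp: algebra_simps)
  then show False by (cases c, cases d) (auto simp: zero_prod_def)
qed

lemma isF_unique: "isF \<sigma> f \<Longrightarrow> isF \<sigma> g \<Longrightarrow> f = g"
proof (induction arbitrary: g rule: isF.induct)
  case (base \<sigma>)
  from base.prems show ?case
    by cases (use base.hyps in auto)
next
  case (step \<sigma> \<sigma>0 \<sigma>1 \<sigma>' f0 f1 f')
  from step.prems show ?case
  proof cases
    case base
    then show ?thesis using step.hyps by simp
  next
    case (step \<tau>0 \<tau>1 \<tau>' g0 g1 g')
    have Q: "\<sigma>1 \<in> Qset" "\<tau>1 \<in> Qset" using is_parents_Qset step.hyps(3) step(4) by blast+
    have d: "farey_mediant \<sigma> \<sigma>0 \<sigma>1" "farey_mediant \<sigma>1 \<sigma>0 \<sigma>'"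
      "farey_mediant \<sigma> \<tau>0 \<tau>1" "farey_mediant \<tau>1 \<tau>0 \<tau>'"
      using is_parents_iff_farey_mediant step.hyps(1,3,4) step(4,5) Q by blast+
    then have "\<tau>0 = \<sigma>0 \<and> \<tau>1 = \<sigma>1"
      using farey_mediant_unique[OF step.hyps(1) d(1,3)] farey_mediant_asym by blast
    moreover from this have "\<tau>' = \<sigma>'" using d(2,4) by (auto simp: farey_mediant_def)
    ultimately show ?thesis using step.IH step(1,6-8) by metis
  qed
qed

lemma isF_exists: "\<sigma> \<in> Qset \<Longrightarrow> \<exists>f. isF \<sigma> f"
proof (induction rule: farey_induct)
  case (base \<sigma>)
  then show ?case using isF.base by blast
next
  case (step \<sigma> s0 s1)
  then obtain f0 f1 f' where f: "isF s0 f0" "isF s1 f1" "isF (s1 - s0) f'" by blast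
  have "s1 \<in> Qset" using step(3) by (simp add: farey_mediant_def)
  then have "is_parents \<sigma> s0 s1" "is_parents s1 s0 (s1 - s0)"
    using step(1,3,4) is_parents_iff_farey_mediant by blast+
  then show ?case using isF.step[OF step(1,2) _ _ f] by blast
qed

lemma isF_F: "\<sigma> \<in> Qset \<Longrightarrow> isF \<sigma> (F \<sigma>)"
  unfolding F_def using isF_exists isF_unique by (metis theI)

lemma F_base: "\<sigma> \<in> {Qzero, Qone, Qinf} \<Longrightarrow> F \<sigma> = ind (J \<sigma>)"
  using isF_F[of \<sigma>] Qset_base isF.base isF_unique by blast

lemma F_step:
  assumes "\<sigma> \<in> Qset" "\<sigma> \<notin> {Qzero, Qone, Qinf}" "farey_mediant \<sigma> s0 s1" "farey_mediant s1 s0 s'"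
  shows "F \<sigma> u = conv (conv (F s0) (F s1)) (ind Lambda) u - F s' u"
proof -
  have Q: "s0 \<in> Qset" "s1 \<in> Qset" "s' \<in> Qset" using assms by (auto simp: farey_mediant_def)
  then have "is_parents \<sigma> s0 s1" "is_parents s1 s0 s'"
    using is_parents_iff_farey_mediant assms by auto
  then have "isF \<sigma> (\<lambda>u. conv (conv (F s0) (F s1)) (ind Lambda) u - F s' u)"
    using isF.step[OF assms(1,2) _ _ isF_F[OF Q(1)] isF_F[OF Q(2)] isF_F[OF Q(3)]] by blast
  then have "F \<sigma> = (\<lambda>u. conv (conv (F s0) (F s1)) (ind Lambda) u - F s' u)"
    using isF_F[OF assms(1)] isF_unique by blast
  then show ?thesis by simp
qed

lemma conv_eq_sum:
  assumes "finite A" "{x. f x \<noteq> 0} \<subseteq> A"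
  shows "conv f g u = (\<Sum>x\<in>A. f x * g (u - x))"
proof -
  have "conv f g u = (\<Sum>x\<in>{x. f x \<noteq> 0}. f x * g (u - x))"
    unfolding conv_def by (simp add: minus_prod_def)
  also have "\<dots> = (\<Sum>x\<in>A. f x * g (u - x))"
    by (rule sum.mono_neutral_left) (use assms in auto)
  finally show ?thesis .
qed

lemma conv_ind_singleton: "conv (ind {P}) g u = g (u - P)"
  by (subst conv_eq_sum[of "{P}"]) (auto simp: ind_def)

lemma finite_support_conv:
  assumes "finite {x. f x \<noteq> 0}" "finite {x. g x \<noteq> 0}"
  shows "finite {u. conv f g u \<noteq> 0}"
proof -
  have "{u. conv f g u \<noteq> 0} \<subseteq> (\<lambda>(x, y). x + y) ` ({x. f x \<noteq> 0} \<times> {x. g x \<noteq> 0})"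
  proof
    fix u assume "u \<in> {u. conv f g u \<noteq> 0}"
    then have "(\<Sum>x\<in>{x. f x \<noteq> 0}. f x * g (u - x)) \<noteq> 0"
      using conv_eq_sum[OF assms(1), of f g u] by auto
    then obtain x where "x \<in> {x. f x \<noteq> 0}" "f x * g (u - x) \<noteq> 0"
      by (rule sum.not_neutral_contains_not_neutral)
    then have "f x \<noteq> 0" "g (u - x) \<noteq> 0" by auto
    then show "u \<in> (\<lambda>(x, y). x + y) ` ({x. f x \<noteq> 0} \<times> {x. g x \<noteq> 0})"
      by (intro image_eqI[of _ _ "(x, u - x)"]) auto
  qed
  then show ?thesis by (rule finite_subset) (use assms in simp)
qed

lemma conv_conv_ind_Lambda:
  assumes A: "finite A" "{x. f0 x \<noteq> 0} \<subseteq> A" and f1: "finite {x. f1 x \<noteq> 0}"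
  shows "conv (conv f0 f1) (ind Lambda) u = (\<Sum>(l, x)\<in>Lambda \<times> A. f0 x * f1 (u - l - x))"
proof -
  have "finite {x. conv f0 f1 x \<noteq> 0}"
    using finite_support_conv finite_subset[OF A(2,1)] f1 by blast
  moreover define B where "B = {x. conv f0 f1 x \<noteq> 0} \<union> (\<lambda>l. u - l) ` Lambda"
  ultimately have B: "finite B" by (simp add: Lambda_def)
  then have "conv (conv f0 f1) (ind Lambda) u = (\<Sum>y\<in>B. conv f0 f1 y * ind Lambda (u - y))"
    by (rule conv_eq_sum) (auto simp: B_def)
  also have "\<dots> = (\<Sum>y\<in>(\<lambda>l. u - l) ` Lambda. conv f0 f1 y * ind Lambda (u - y))"
  proof (rule sum.mono_neutral_right[OF B])
    have "y \<in> (\<lambda>l. u - l) ` Lambda" if "u - y \<in> Lambda" for y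
      using that by (intro image_eqI[of _ _ "u - y"]) auto
    then show "\<forall>y\<in>B - (\<lambda>l. u - l) ` Lambda. conv f0 f1 y * ind Lambda (u - y) = 0"
      by (auto simp: ind_def)
  qed (auto simp: B_def)
  also have "\<dots> = (\<Sum>l\<in>Lambda. conv f0 f1 (u - l))"
    by (subst sum.reindex) (auto simp: inj_on_def ind_def)
  also have "\<dots> = (\<Sum>l\<in>Lambda. \<Sum>x\<in>A. f0 x * f1 (u - l - x))"
    using conv_eq_sum[OF A] by simp
  also have "\<dots> = (\<Sum>(l, x)\<in>Lambda \<times> A. f0 x * f1 (u - l - x))"
    by (rule sum.cartesian_product)
  finally show ?thesis .
qed

section \<open>The sets \<open>J\<^sub>\<sigma>\<close>\<close>

lemma mem_J_iff: "(a, b) \<in> J (q, p) \<longleftrightarrow> a mod 2 = q mod 2 \<and> b mod 2 = p mod 2 \<and> -q \<le> a \<and> -p \<le> b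
    \<and> a + b \<le> p + q - 2 \<and> 0 \<le> p * a + q * b"
  by (simp add: J_def)

lemma J_swap: "(a, b) \<in> J (q, p) \<longleftrightarrow> (b, a) \<in> J (p, q)"
  by (auto simp: mem_J_iff algebra_simps)

lemma finite_J: "finite (J \<sigma>)"
proof -
  obtain q p where "\<sigma> = (q, p)" by fastforce
  moreover have "J (q, p) \<subseteq> {-q..2 * p + q} \<times> {-p..2 * q + p}" by (auto simp: J_def)
  ultimately show ?thesis by (auto intro: finite_subset)
qed

lemma Ppt_mem_J: "0 \<le> q \<Longrightarrow> 1 \<le> p \<Longrightarrow> Ppt (q, p) 0 \<in> J (q, p)"
  and Qpt_mem_J: "1 \<le> q \<Longrightarrow> 0 \<le> p \<Longrightarrow> Qpt (q, p) 0 \<in> J (q, p)"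
proof -
  have "(- p) mod 2 = p mod 2" "(- q) mod 2 = q mod 2" by presburger+
  then show "0 \<le> q \<Longrightarrow> 1 \<le> p \<Longrightarrow> Ppt (q, p) 0 \<in> J (q, p)"
    "1 \<le> q \<Longrightarrow> 0 \<le> p \<Longrightarrow> Qpt (q, p) 0 \<in> J (q, p)"
    by (simp_all add: Ppt_def Qpt_def mem_J_iff algebra_simps)
qed

lemma Lambda_cases: "(l1, l2) \<in> Lambda \<longleftrightarrow> (l1, l2) = (0, 0) \<or> (l1, l2) = (0, 2) \<or> (l1, l2) = (2, 0)"
  by (auto simp: Lambda_def)

lemma Lambda_swap: "(l1, l2) \<in> Lambda \<longleftrightarrow> (l2, l1) \<in> Lambda"
  by (auto simp: Lambda_def)

lemma farey_orient_pos:
  fixes q0 p0 q1 p1 :: int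
  assumes "q1 * p0 - q0 * p1 = 1" "0 \<le> q0" "0 \<le> p0" "0 \<le> q1" "0 \<le> p1"
  shows "1 \<le> p0" "1 \<le> q1"
proof -
  have "0 \<le> q0 * p1" using assms by simp
  then have "0 < q1 * p0" using assms(1) by linarith
  then show "1 \<le> p0" "1 \<le> q1" using assms by (auto simp: zero_less_mult_iff)
qed

text \<open>For Farey neighbours \<open>s\<^sub>0 < s\<^sub>1\<close> with mediant \<open>\<sigma> = q/p\<close>, the linear form \<open>p\<alpha> + q\<beta>\<close> that
  cuts out \<open>J\<^sub>\<sigma>\<close> is odd and \<open>\<ge> -1\<close> on \<open>J\<^bsub>s0\<^esub>\<close>, with equality only at the corner \<open>P\<^bsup>s0\<^esup>\<^sub>0\<close>.\<close>

lemma J_left_parent_bound: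
  fixes q0 p0 q1 p1 a b :: int
  assumes ori: "q1 * p0 - q0 * p1 = 1" and nn: "0 \<le> q0" "0 \<le> p0" "0 \<le> q1" "0 \<le> p1"
    and x: "(a, b) \<in> J (q0, p0)"
  shows "odd ((p0 + p1) * a + (q0 + q1) * b)" "-1 \<le> (p0 + p1) * a + (q0 + q1) * b"
    "(p0 + p1) * a + (q0 + q1) * b = -1 \<Longrightarrow> (a, b) = (q0, - p0)"
proof -
  define p where "p = p0 + p1"
  define q where "q = q0 + q1"
  have x: "a mod 2 = q0 mod 2" "b mod 2 = p0 mod 2" "-q0 \<le> a" "-p0 \<le> b" "0 \<le> p0 * a + q0 * b"
    using x by (auto simp: mem_J_iff)
  have "\<exists>i. a = q0 + 2 * i" "\<exists>j. b = - p0 + 2 * j" using x(1,2) by presburger+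
  then obtain i j where ij: "a = q0 + 2 * i" "b = - p0 + 2 * j" by blast
  have lin: "p * a + q * b + 1 = p * (a - q0) + q * (b + p0)"
    using ori by (simp add: p_def q_def algebra_simps)
  have "p * a + q * b = 2 * (p * i + q * j) - ((q0 + q1) * p0 - (p0 + p1) * q0)"
    by (simp add: ij p_def q_def algebra_simps)
  then have "p * a + q * b = 2 * (p * i + q * j) - 1" using ori by (simp add: algebra_simps)
  then show "odd ((p0 + p1) * a + (q0 + q1) * b)" by (simp add: p_def q_def)
  have p: "0 < p" "0 < q" using farey_orient_pos[OF ori nn] nn by (simp_all add: p_def q_def)
  have "0 \<le> p * (a - q0) + q * (b + p0) \<and> (p * (a - q0) + q * (b + p0) = 0 \<longrightarrow> a = q0 \<and> b = - p0)"
  proof (cases "q0 \<le> a")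
    case True
    then have "0 \<le> p * (a - q0)" "0 \<le> q * (b + p0)" using x p by simp_all
    then show ?thesis using p by (auto simp: add_nonneg_eq_0_iff)
  next
    case False
    have "q * (q0 * b) \<ge> q * (- p0 * a)" using x p by (intro mult_left_mono) auto
    then have "q0 * (p * (a - q0) + q * (b + p0)) \<ge> q0 - a"
      using ori by (simp add: p_def q_def algebra_simps)
    then have "0 < q0 * (p * (a - q0) + q * (b + p0))" using False by linarith
    moreover have "0 < q0" using False x by linarith
    ultimately have "0 < p * (a - q0) + q * (b + p0)" by (simp add: zero_less_mult_iff)
    then show ?thesis by simp
  qed
  then show "-1 \<le> (p0 + p1) * a + (q0 + q1) * b"
    "(p0 + p1) * a + (q0 + q1) * b = -1 \<Longrightarrow> (a, b) = (q0, - p0)"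
    using lin by (auto simp: p_def q_def)
qed

lemma J_right_parent_bound:
  fixes q0 p0 q1 p1 a b :: int
  assumes ori: "q1 * p0 - q0 * p1 = 1" and nn: "0 \<le> q0" "0 \<le> p0" "0 \<le> q1" "0 \<le> p1"
    and y: "(a, b) \<in> J (q1, p1)"
  shows "odd ((p0 + p1) * a + (q0 + q1) * b)" "-1 \<le> (p0 + p1) * a + (q0 + q1) * b"
    "(p0 + p1) * a + (q0 + q1) * b = -1 \<Longrightarrow> (a, b) = (- q1, p1)"
proof -
  have "p0 * q1 - p1 * q0 = 1" using ori by (simp add: algebra_simps)
  note swapped = J_left_parent_bound[OF this nn(4,3,2,1) J_swap[THEN iffD1, OF y]]
  show "odd ((p0 + p1) * a + (q0 + q1) * b)" "-1 \<le> (p0 + p1) * a + (q0 + q1) * b"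
    "(p0 + p1) * a + (q0 + q1) * b = -1 \<Longrightarrow> (a, b) = (- q1, p1)"
    using swapped by (simp_all add: algebra_simps)
qed

text \<open>Hence \<open>J\<^bsub>s0\<^esub> + \<Lambda> + J\<^bsub>s1\<^esub> \<subseteq> J\<^sub>\<sigma>\<close> except for the single point \<open>P\<^bsup>s0\<^esup>\<^sub>0 + Q\<^bsup>s1\<^esup>\<^sub>0\<close>.\<close>

lemma J_sum_rigid:
  fixes q0 p0 q1 p1 a0 b0 a1 b1 l1 l2 :: int
  assumes ori: "q1 * p0 - q0 * p1 = 1" and nn: "0 \<le> q0" "0 \<le> p0" "0 \<le> q1" "0 \<le> p1"
    and x: "(a0, b0) \<in> J (q0, p0)" and y: "(a1, b1) \<in> J (q1, p1)" and l: "(l1, l2) \<in> Lambda"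
    and out: "(a0 + a1 + l1, b0 + b1 + l2) \<notin> J (q0 + q1, p0 + p1)"
  shows "(a0, b0) = (q0, - p0) \<and> (a1, b1) = (- q1, p1) \<and> (l1, l2) = (0, 0)"
proof -
  define L where "L a b = (p0 + p1) * a + (q0 + q1) * b" for a b
  have p: "0 < p0 + p1" "0 < q0 + q1" using farey_orient_pos[OF ori nn] nn by simp_all
  have lo: "l1 = 0 \<and> l2 = 0 \<or> l1 = 0 \<and> l2 = 2 \<or> l1 = 2 \<and> l2 = 0" using l by (simp add: Lambda_cases)
  have xm: "a0 mod 2 = q0 mod 2" "b0 mod 2 = p0 mod 2" "-q0 \<le> a0" "-p0 \<le> b0" "a0 + b0 \<le> p0 + q0 - 2"
    using x by (auto simp: mem_J_iff)
  have ym: "a1 mod 2 = q1 mod 2" "b1 mod 2 = p1 mod 2" "-q1 \<le> a1" "-p1 \<le> b1" "a1 + b1 \<le> p1 + q1 - 2"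
    using y by (auto simp: mem_J_iff)
  have l12: "l1 mod 2 = 0 mod 2" "l2 mod 2 = 0 mod 2" "0 \<le> l1" "0 \<le> l2" "l1 + l2 \<le> 2"
    using lo by auto
  have "(a0 + a1 + l1) mod 2 = (q0 + q1 + 0) mod 2"
    using mod_add_cong[OF mod_add_cong[OF xm(1) ym(1)] l12(1)] .
  moreover have "(b0 + b1 + l2) mod 2 = (p0 + p1 + 0) mod 2"
    using mod_add_cong[OF mod_add_cong[OF xm(2) ym(2)] l12(2)] .
  moreover have "-(q0 + q1) \<le> a0 + a1 + l1" "-(p0 + p1) \<le> b0 + b1 + l2"
    "(a0 + a1 + l1) + (b0 + b1 + l2) \<le> (p0 + p1) + (q0 + q1) - 2"
    using xm ym l12 by linarith+
  ultimately have "L (a0 + a1 + l1) (b0 + b1 + l2) < 0"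
    using out by (simp add: mem_J_iff L_def not_le)
  moreover have "L (a0 + a1 + l1) (b0 + b1 + l2) = L a0 b0 + L a1 b1 + L l1 l2"
    by (simp add: L_def algebra_simps)
  moreover have "L l1 l2 = 0 \<and> (l1, l2) = (0, 0) \<or> 2 \<le> L l1 l2" using lo p by (auto simp: L_def)
  moreover have odd_cases: "k = -1 \<or> 1 \<le> k" if "odd k" "-1 \<le> k" for k :: int
    using that by presburger
  then have "L a0 b0 = -1 \<or> 1 \<le> L a0 b0" "L a1 b1 = -1 \<or> 1 \<le> L a1 b1"
    using J_left_parent_bound[OF ori nn x] J_right_parent_bound[OF ori nn y] by (simp_all add: L_def)
  ultimately have "L a0 b0 = -1" "L a1 b1 = -1" "(l1, l2) = (0, 0)" by auto
  then show ?thesis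
    using J_left_parent_bound[OF ori nn x] J_right_parent_bound[OF ori nn y] by (simp add: L_def)
qed

text \<open>\<open>J (q, p)\<close> in the coordinates \<open>\<alpha> = 2i - q\<close>, \<open>\<beta> = 2j - p\<close>: the lattice points of the
  triangle \<open>0 \<le> i, j\<close>, \<open>i + j \<le> p + q - 1\<close> on or above the line through \<open>(q, 0)\<close> and \<open>(0, p)\<close>.\<close>

definition J_idx :: "int \<Rightarrow> int \<Rightarrow> int \<Rightarrow> int \<Rightarrow> bool" where
  "J_idx q p i j \<longleftrightarrow> 0 \<le> i \<and> 0 \<le> j \<and> i + j \<le> p + q - 1 \<and> p * q \<le> p * i + q * j"

lemma J_idx_mem_J: "J_idx q p i j \<Longrightarrow> (2 * i - q, 2 * j - p) \<in> J (q, p)"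
proof -
  assume "J_idx q p i j"
  moreover have "(2 * i - q) mod 2 = q mod 2" "(2 * j - p) mod 2 = p mod 2" by presburger+
  ultimately show ?thesis unfolding J_idx_def mem_J_iff by (simp add: algebra_simps)
qed

lemma J_mem_J_idx:
  assumes "(a, b) \<in> J (q, p)"
  obtains i j where "a = 2 * i - q" "b = 2 * j - p" "J_idx q p i j"
proof -
  have "a mod 2 = q mod 2" "b mod 2 = p mod 2" using assms by (auto simp: mem_J_iff)
  then have "\<exists>i. a = 2 * i - q" "\<exists>j. b = 2 * j - p" by presburger+
  then obtain i j where ij: "a = 2 * i - q" "b = 2 * j - p" by blast
  moreover have "J_idx q p i j"
    using assms unfolding mem_J_iff J_idx_def ij by (auto simp: algebra_simps)
  ultimately show thesis by (rule that)
qed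

lemma J_idx_swap: "J_idx q p i j \<longleftrightarrow> J_idx p q j i"
  by (auto simp: J_idx_def algebra_simps)

lemma split_slack:
  fixes r1 r2 c0 c1 :: int
  assumes "0 \<le> r1" "0 \<le> r2" "0 \<le> c0" "0 \<le> c1" "r1 + r2 \<le> c0 + c1 + 1"
  shows "\<exists>s1 s2 t1 t2 e1 e2. 0 \<le> s1 \<and> 0 \<le> s2 \<and> 0 \<le> t1 \<and> 0 \<le> t2 \<and> 0 \<le> e1 \<and> 0 \<le> e2
     \<and> s1 + t1 + e1 = r1 \<and> s2 + t2 + e2 = r2 \<and> s1 + s2 \<le> c0 \<and> t1 + t2 \<le> c1 \<and> e1 + e2 \<le> 1"
proof -
  obtain e1 e2 :: int where e: "0 \<le> e1" "0 \<le> e2" "e1 \<le> r1" "e2 \<le> r2" "e1 + e2 \<le> 1"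
    "r1 + r2 - e1 - e2 \<le> c0 + c1"
  proof (cases "r1 + r2 \<le> c0 + c1")
    case True
    then show ?thesis using that[of 0 0] assms by auto
  next
    case False
    then show ?thesis using that[of 1 0] that[of 0 1] assms by (cases "0 < r1") auto
  qed
  define s1 where "s1 = min (r1 - e1) c0"
  define s2 where "s2 = min (r2 - e2) (c0 - s1)"
  have s: "0 \<le> s1" "0 \<le> s2" "0 \<le> r1 - e1 - s1" "0 \<le> r2 - e2 - s2" "s1 + s2 \<le> c0"
    using e assms by (simp_all add: s1_def s2_def)
  have "s1 = r1 - e1 \<or> s1 = c0" "s2 = r2 - e2 \<or> s2 = c0 - s1"
    by (simp_all add: s1_def s2_def min_def)
  then have t: "(r1 - e1 - s1) + (r2 - e2 - s2) \<le> c1"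
    by (elim disjE) (use e s assms in linarith)+
  moreover have "s1 + (r1 - e1 - s1) + e1 = r1" "s2 + (r2 - e2 - s2) + e2 = r2" by simp_all
  ultimately show ?thesis using s e(1,2,5) by blast
qed

text \<open>\<open>J_idx\<close> is upward closed in its triangle, and the triangle of the mediant is one larger
  than the sum of the triangles of the parents: points of the parents below \<open>(i, j)\<close> extend to
  a decomposition of \<open>(i, j)\<close>.\<close>

lemma J_idx_add_slack:
  fixes q0 p0 q1 p1 i j x1 x2 y1 y2 :: int
  assumes nn: "0 \<le> q0" "0 \<le> p0" "0 \<le> q1" "0 \<le> p1"
    and x: "J_idx q0 p0 x1 x2" and y: "J_idx q1 p1 y1 y2"
    and le: "x1 + y1 \<le> i" "x2 + y2 \<le> j" "i + j \<le> (p0 + p1) + (q0 + q1) - 1"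
  shows "\<exists>i0 j0 i1 j1 e1 e2. J_idx q0 p0 i0 j0 \<and> J_idx q1 p1 i1 j1 \<and> 0 \<le> e1 \<and> 0 \<le> e2 \<and>
    e1 + e2 \<le> 1 \<and> i = i0 + i1 + e1 \<and> j = j0 + j1 + e2"
proof -
  have a: "0 \<le> x1" "0 \<le> x2" "x1 + x2 \<le> p0 + q0 - 1" "p0 * q0 \<le> p0 * x1 + q0 * x2"
    using x unfolding J_idx_def by auto
  have b: "0 \<le> y1" "0 \<le> y2" "y1 + y2 \<le> p1 + q1 - 1" "p1 * q1 \<le> p1 * y1 + q1 * y2"
    using y unfolding J_idx_def by auto
  have "0 \<le> i - x1 - y1" "0 \<le> j - x2 - y2" "0 \<le> p0 + q0 - 1 - x1 - x2" "0 \<le> p1 + q1 - 1 - y1 - y2"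
     "(i - x1 - y1) + (j - x2 - y2) \<le> (p0 + q0 - 1 - x1 - x2) + (p1 + q1 - 1 - y1 - y2) + 1"
    using a b le by linarith+
  from split_slack[OF this] obtain s1 s2 t1 t2 e1 e2 where d: "0 \<le> s1" "0 \<le> s2" "0 \<le> t1" "0 \<le> t2"
     "0 \<le> e1" "0 \<le> e2" "s1 + t1 + e1 = i - x1 - y1" "s2 + t2 + e2 = j - x2 - y2"
     "s1 + s2 \<le> p0 + q0 - 1 - x1 - x2" "t1 + t2 \<le> p1 + q1 - 1 - y1 - y2" "e1 + e2 \<le> 1"
    by blast
  have "p0 * x1 + q0 * x2 \<le> p0 * (x1 + s1) + q0 * (x2 + s2)"
    "p1 * y1 + q1 * y2 \<le> p1 * (y1 + t1) + q1 * (y2 + t2)"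
    using d nn by (simp_all add: algebra_simps)
  then have "J_idx q0 p0 (x1 + s1) (x2 + s2)" "J_idx q1 p1 (y1 + t1) (y2 + t2)"
    unfolding J_idx_def using a b d by linarith+
  moreover have "i = (x1 + s1) + (y1 + t1) + e1" "j = (x2 + s2) + (y2 + t2) + e2" using d by linarith+
  ultimately show ?thesis using d(5,6,11) by blast
qed

lemma J_idx_right_parent:
  fixes q0 p0 q1 p1 i j :: int
  assumes ori: "q1 * p0 - q0 * p1 = 1" and nn: "0 \<le> q0" "0 \<le> p0" "0 \<le> q1" "0 \<le> p1"
    and u: "J_idx (q0 + q1) (p0 + p1) i j" and i: "q0 \<le> i" "i < q0 + q1" and j: "j < p1"
  shows "J_idx q1 p1 (i - q0) j"
proof -
  define a where "a = i - q0"
  define p where "p = p0 + p1"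
  define q where "q = q0 + q1"
  have q1: "1 \<le> q1" using farey_orient_pos[OF ori nn] by simp
  have c: "p * q1 - q * p1 = 1" using ori by (simp add: p_def q_def algebra_simps)
  have H: "p * q1 \<le> p * a + q * j" using u by (simp add: J_idx_def a_def p_def q_def algebra_simps)
  have "p1 * q1 \<le> p1 * a + q1 * j"
  proof (rule ccontr)
    assume "\<not> ?thesis"
    then have n: "p1 * a + q1 * j \<le> p1 * q1 - 1" by simp
    have "q1 * (p * q1) \<le> q1 * (p * a + q * j)" using H nn by (simp add: mult_left_mono)
    also have "q1 * (p * a + q * j) = q * (p1 * a + q1 * j) + a" using c by (simp add: algebra_simps)
    also have "\<dots> \<le> q * (p1 * q1 - 1) + a" using n nn q1 by (simp add: mult_left_mono q_def)
    finally have "q1 * (p * q1) \<le> q * (p1 * q1 - 1) + a" .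
    moreover have "q1 * (p * q1) = q * p1 * q1 + q1" using c by (simp add: algebra_simps)
    ultimately have "q + q1 \<le> a" by (simp add: algebra_simps)
    then show False using i nn by (simp add: a_def q_def)
  qed
  then show ?thesis using i j u by (auto simp: J_idx_def a_def)
qed

lemma J_idx_mediant_decompose_left:
  fixes q0 p0 q1 p1 i j :: int
  assumes ori: "q1 * p0 - q0 * p1 = 1" and nn: "0 \<le> q0" "0 \<le> p0" "0 \<le> q1" "0 \<le> p1"
    and u: "J_idx (q0 + q1) (p0 + p1) i j" and i: "q0 \<le> i"
  shows "\<exists>i0 j0 i1 j1 e1 e2. J_idx q0 p0 i0 j0 \<and> J_idx q1 p1 i1 j1 \<and> 0 \<le> e1 \<and> 0 \<le> e2 \<and>
    e1 + e2 \<le> 1 \<and> i = i0 + i1 + e1 \<and> j = j0 + j1 + e2"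
proof -
  have p0: "1 \<le> p0" and q1: "1 \<le> q1" using farey_orient_pos[OF ori nn] by simp_all
  have u': "0 \<le> j" "i + j \<le> (p0 + p1) + (q0 + q1) - 1" using u by (auto simp: J_idx_def)
  have P0: "J_idx q0 p0 q0 0" using p0 nn by (auto simp: J_idx_def)
  consider "p1 \<le> j" | "j < p1" "q0 + q1 \<le> i" | "j < p1" "i < q0 + q1" by linarith
  then show ?thesis
  proof cases
    case 1
    have "J_idx q1 p1 0 p1" using q1 nn by (auto simp: J_idx_def)
    then show ?thesis using J_idx_add_slack[OF nn P0] 1 i u' by auto
  next
    case 2
    then have "J_idx q1 p1 q1 0" using u' nn by (auto simp: J_idx_def)
    then show ?thesis using J_idx_add_slack[OF nn P0] 2 u' by auto
  next
    case 3
    then have "J_idx q1 p1 (i - q0) j" using J_idx_right_parent[OF ori nn u i] by simp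
    then show ?thesis using J_idx_add_slack[OF nn P0] u' by auto
  qed
qed

lemma J_idx_mediant_decompose:
  fixes q0 p0 q1 p1 i j :: int
  assumes ori: "q1 * p0 - q0 * p1 = 1" and nn: "0 \<le> q0" "0 \<le> p0" "0 \<le> q1" "0 \<le> p1"
    and u: "J_idx (q0 + q1) (p0 + p1) i j"
  shows "\<exists>i0 j0 i1 j1 e1 e2. J_idx q0 p0 i0 j0 \<and> J_idx q1 p1 i1 j1 \<and> 0 \<le> e1 \<and> 0 \<le> e2 \<and>
    e1 + e2 \<le> 1 \<and> i = i0 + i1 + e1 \<and> j = j0 + j1 + e2"
proof (cases "q0 \<le> i")
  case True
  then show ?thesis by (rule J_idx_mediant_decompose_left[OF ori nn u])
next
  case False
  define p where "p = p0 + p1"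
  define q where "q = q0 + q1"
  have p0: "1 \<le> p0" and q1: "1 \<le> q1" using farey_orient_pos[OF ori nn] by simp_all
  have u': "0 \<le> i" "p * q \<le> p * i + q * j" using u by (auto simp: J_idx_def p_def q_def)
  have j: "p1 \<le> j"
  proof (rule ccontr)
    assume "\<not> ?thesis"
    then have "p * i + q * j \<le> p * (q0 - 1) + q * (p1 - 1)" using False u' p0 q1 nn
      by (intro add_mono mult_left_mono) (auto simp: p_def q_def)
    moreover have "p * q0 + q * p1 = p * q - 1" using ori by (simp add: p_def q_def algebra_simps)
    ultimately show False using u' p0 q1 nn by (simp add: algebra_simps p_def q_def)
  qed
  have ori': "p0 * q1 - p1 * q0 = 1" using ori by (simp add: algebra_simps)
  have "J_idx (p1 + p0) (q1 + q0) j i" using u by (simp add: J_idx_swap add.commute)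
  from J_idx_mediant_decompose_left[OF ori' nn(4,3,2,1) this j]
  obtain i0 j0 i1 j1 e1 e2 where "J_idx p1 q1 i0 j0" "J_idx p0 q0 i1 j1"
    "0 \<le> e1" "0 \<le> e2" "e1 + e2 \<le> 1" "j = i0 + i1 + e1" "i = j0 + j1 + e2"
    by blast
  moreover from this have "J_idx q0 p0 j1 i1" "J_idx q1 p1 j0 i0" "i = j1 + j0 + e2" "j = i1 + i0 + e1"
    "e2 + e1 \<le> 1"
    using J_idx_swap[of q0 p0 j1 i1] J_idx_swap[of q1 p1 j0 i0] by simp_all
  ultimately show ?thesis by blast
qed

lemma J_mediant_subset_sum:
  fixes q0 p0 q1 p1 :: int and u :: "int \<times> int"
  assumes ori: "q1 * p0 - q0 * p1 = 1" and nn: "0 \<le> q0" "0 \<le> p0" "0 \<le> q1" "0 \<le> p1"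
    and u: "u \<in> J (q0 + q1, p0 + p1)"
  shows "\<exists>x\<in>J (q0, p0). \<exists>l\<in>Lambda. u - l - x \<in> J (q1, p1)"
proof -
  obtain a b where ab: "u = (a, b)" by fastforce
  obtain i j where ij: "a = 2 * i - (q0 + q1)" "b = 2 * j - (p0 + p1)" "J_idx (q0 + q1) (p0 + p1) i j"
    using J_mem_J_idx u ab by blast
  obtain i0 j0 i1 j1 e1 e2 where d: "J_idx q0 p0 i0 j0" "J_idx q1 p1 i1 j1" "0 \<le> e1" "0 \<le> e2"
    "e1 + e2 \<le> 1" "i = i0 + i1 + e1" "j = j0 + j1 + e2"
    using J_idx_mediant_decompose[OF ori nn ij(3)] by blast
  have "(e1 = 0 \<and> e2 = 0) \<or> (e1 = 0 \<and> e2 = 1) \<or> (e1 = 1 \<and> e2 = 0)" using d(3,4,5) by auto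
  then have "(2 * e1, 2 * e2) \<in> Lambda" by (auto simp: Lambda_def)
  moreover have "u - (2 * e1, 2 * e2) - (2 * i0 - q0, 2 * j0 - p0) = (2 * i1 - q1, 2 * j1 - p1)"
    using ab ij d by simp
  ultimately show ?thesis using J_idx_mem_J[OF d(1)] J_idx_mem_J[OF d(2)] by metis
qed

text \<open>The symmetry \<open>(q, p) \<mapsto> (p, q)\<close> reverses orientations and exchanges the corners
  \<open>P\<^sub>0\<close> and \<open>Q\<^sub>0\<close>; indexing the corners by the orientation \<open>e = \<plusminus>1\<close> of the Farey pair lets
  one argument cover both orientations.\<close>

definition P_or :: "int \<times> int \<Rightarrow> int \<Rightarrow> int \<times> int" where
  "P_or s e = (if e = 1 then Ppt s 0 else Qpt s 0)"

definition Q_or :: "int \<times> int \<Rightarrow> int \<Rightarrow> int \<times> int" where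
  "Q_or s e = (if e = 1 then Qpt s 0 else Ppt s 0)"

lemma P_or_add_Q_or: "P_or s e + Q_or s e = 0"
  by (cases s) (simp add: P_or_def Q_or_def Ppt_def Qpt_def zero_prod_def)

lemma P_or_Q_or_corners: "{P_or s e, Q_or s e} = {Ppt s 0, Qpt s 0}"
  by (auto simp: P_or_def Q_or_def)

lemma swap_add: "prod.swap (x + y) = prod.swap x + prod.swap y"
  by (cases x, cases y) simp

lemma swap_diff: "prod.swap (x - y) = prod.swap x - prod.swap y"
  by (cases x, cases y) simp

lemma swap_mem_J: "prod.swap x \<in> J (prod.swap s) \<longleftrightarrow> x \<in> J s"
  by (cases x, cases s) (simp add: J_swap)

lemma swap_mem_Lambda: "prod.swap l \<in> Lambda \<longleftrightarrow> l \<in> Lambda"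
  by (cases l) (simp add: Lambda_swap)

lemma orient_swap: "orient (prod.swap a) (prod.swap b) = - orient a b"
  by (simp add: orient_def)

lemma farey_mediant_swap:
  "farey_mediant \<sigma> a b \<Longrightarrow> farey_mediant (prod.swap \<sigma>) (prod.swap a) (prod.swap b)"
  by (cases a, cases b)
    (auto simp: farey_mediant_def orient_def Qset_iff coprime_commute abs_minus_commute mult.commute)

lemma P_or_swap: "e = 1 \<or> e = -1 \<Longrightarrow> P_or (prod.swap s) (- e) = prod.swap (P_or s e)"
  and Q_or_swap: "e = 1 \<or> e = -1 \<Longrightarrow> Q_or (prod.swap s) (- e) = prod.swap (Q_or s e)"
  by (cases s, auto simp: P_or_def Q_or_def Ppt_def Qpt_def)+

lemma farey_orient_wlog:
  assumes "farey_mediant \<sigma> s0 s1"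
    and pos: "\<And>\<sigma> s0 s1. farey_mediant \<sigma> s0 s1 \<Longrightarrow> orient s0 s1 = 1 \<Longrightarrow> P \<sigma> s0 s1 1"
    and swap: "\<And>\<sigma> s0 s1. farey_mediant \<sigma> s0 s1 \<Longrightarrow> orient s0 s1 = 1
       \<Longrightarrow> P \<sigma> s0 s1 1 \<Longrightarrow> P (prod.swap \<sigma>) (prod.swap s0) (prod.swap s1) (-1)"
  shows "P \<sigma> s0 s1 (orient s0 s1)"
  using farey_mediant_orient[OF assms(1)]
proof
  assume "orient s0 s1 = -1"
  moreover note swapped = farey_mediant_swap[OF assms(1)]
  moreover have "orient (prod.swap s0) (prod.swap s1) = 1" using calculation by (simp add: orient_swap)
  ultimately show ?thesis using swap[OF swapped] pos[OF swapped] by simp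
qed (use pos assms(1) in simp)

lemma farey_mediant_coords:
  assumes "farey_mediant \<sigma> s0 s1"
  obtains q0 p0 q1 p1 where "s0 = (q0, p0)" "s1 = (q1, p1)" "\<sigma> = (q0 + q1, p0 + p1)"
    "0 \<le> q0" "0 \<le> p0" "0 \<le> q1" "0 \<le> p1" "orient s0 s1 = q1 * p0 - q0 * p1"
proof -
  obtain q0 p0 q1 p1 where s: "s0 = (q0, p0)" "s1 = (q1, p1)" by fastforce
  moreover have "\<sigma> = (q0 + q1, p0 + p1)" using assms by (auto simp: farey_mediant_def s)
  moreover have "0 \<le> q0" "0 \<le> p0" "0 \<le> q1" "0 \<le> p1"
    using assms Qset_nonneg by (fastforce simp: farey_mediant_def s)+
  ultimately show thesis using that by (simp add: orient_def)
qed

lemma J_sum_rigid_oriented: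
  assumes "farey_mediant \<sigma> s0 s1" "x \<in> J s0" "y \<in> J s1" "l \<in> Lambda" "x + y + l \<notin> J \<sigma>"
  shows "x = P_or s0 (orient s0 s1) \<and> y = Q_or s1 (orient s0 s1) \<and> l = 0"
proof -
  have "\<forall>x y l. x \<in> J s0 \<longrightarrow> y \<in> J s1 \<longrightarrow> l \<in> Lambda \<longrightarrow> x + y + l \<notin> J \<sigma> \<longrightarrow>
      x = P_or s0 (orient s0 s1) \<and> y = Q_or s1 (orient s0 s1) \<and> l = 0"
  proof (rule farey_orient_wlog[where P = "\<lambda>\<sigma> s0 s1 e. \<forall>x y l. x \<in> J s0 \<longrightarrow> y \<in> J s1 \<longrightarrow>
      l \<in> Lambda \<longrightarrow> x + y + l \<notin> J \<sigma> \<longrightarrow> x = P_or s0 e \<and> y = Q_or s1 e \<and> l = 0", OF assms(1)])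
    fix \<sigma> s0 s1 :: "int \<times> int"
    assume st: "farey_mediant \<sigma> s0 s1" "orient s0 s1 = 1"
    obtain q0 p0 q1 p1 where c: "s0 = (q0, p0)" "s1 = (q1, p1)" "\<sigma> = (q0 + q1, p0 + p1)"
      "0 \<le> q0" "0 \<le> p0" "0 \<le> q1" "0 \<le> p1" "q1 * p0 - q0 * p1 = 1"
      using farey_mediant_coords[OF st(1)] st(2) by metis
    show "\<forall>x y l. x \<in> J s0 \<longrightarrow> y \<in> J s1 \<longrightarrow> l \<in> Lambda \<longrightarrow> x + y + l \<notin> J \<sigma> \<longrightarrow>
      x = P_or s0 1 \<and> y = Q_or s1 1 \<and> l = 0"
      using J_sum_rigid[OF c(8,4-7)] c(1-3)
      by (auto simp: P_or_def Q_or_def Ppt_def Qpt_def zero_prod_def)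
  next
    fix \<sigma> s0 s1 :: "int \<times> int"
    assume st: "orient s0 s1 = 1" and
      P: "\<forall>x y l. x \<in> J s0 \<longrightarrow> y \<in> J s1 \<longrightarrow> l \<in> Lambda \<longrightarrow> x + y + l \<notin> J \<sigma> \<longrightarrow>
        x = P_or s0 1 \<and> y = Q_or s1 1 \<and> l = 0"
    show "\<forall>x y l. x \<in> J (prod.swap s0) \<longrightarrow> y \<in> J (prod.swap s1) \<longrightarrow> l \<in> Lambda \<longrightarrow>
      x + y + l \<notin> J (prod.swap \<sigma>) \<longrightarrow>
      x = P_or (prod.swap s0) (-1) \<and> y = Q_or (prod.swap s1) (-1) \<and> l = 0"
    proof (intro allI impI)
      fix x y l
      assume "x \<in> J (prod.swap s0)" "y \<in> J (prod.swap s1)" "l \<in> Lambda" "x + y + l \<notin> J (prod.swap \<sigma>)"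
      then have "prod.swap x \<in> J s0" "prod.swap y \<in> J s1" "prod.swap l \<in> Lambda"
        "prod.swap x + prod.swap y + prod.swap l \<notin> J \<sigma>"
        using swap_mem_J[of "prod.swap x" s0] swap_mem_J[of "prod.swap y" s1]
          swap_mem_J[of "prod.swap (x + y + l)" \<sigma>] swap_mem_Lambda[of l]
        by (simp_all add: swap_add)
      then have "prod.swap x = P_or s0 1 \<and> prod.swap y = Q_or s1 1 \<and> prod.swap l = 0"
        using P by blast
      then show "x = P_or (prod.swap s0) (-1) \<and> y = Q_or (prod.swap s1) (-1) \<and> l = 0"
        using P_or_swap[of 1 s0] Q_or_swap[of 1 s1] by (metis swap_swap swap_simp zero_prod_def)
    qed
  qed
  then show ?thesis using assms by blast
qed

lemma J_mediant_subset_sum_oriented: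
  assumes "farey_mediant \<sigma> s0 s1" "u \<in> J \<sigma>"
  obtains x l where "x \<in> J s0" "l \<in> Lambda" "u - l - x \<in> J s1"
proof -
  have "\<forall>u\<in>J \<sigma>. \<exists>x\<in>J s0. \<exists>l\<in>Lambda. u - l - x \<in> J s1"
  proof (rule farey_orient_wlog[where P = "\<lambda>\<sigma> s0 s1 e. \<forall>u\<in>J \<sigma>. \<exists>x\<in>J s0. \<exists>l\<in>Lambda. u - l - x \<in> J s1",
        OF assms(1)])
    fix \<sigma> s0 s1 :: "int \<times> int"
    assume st: "farey_mediant \<sigma> s0 s1" "orient s0 s1 = 1"
    obtain q0 p0 q1 p1 where c: "s0 = (q0, p0)" "s1 = (q1, p1)" "\<sigma> = (q0 + q1, p0 + p1)"
      "0 \<le> q0" "0 \<le> p0" "0 \<le> q1" "0 \<le> p1" "q1 * p0 - q0 * p1 = 1"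
      using farey_mediant_coords[OF st(1)] st(2) by metis
    show "\<forall>u\<in>J \<sigma>. \<exists>x\<in>J s0. \<exists>l\<in>Lambda. u - l - x \<in> J s1"
      using J_mediant_subset_sum[OF c(8,4-7)] c(1-3) by simp
  next
    fix \<sigma> s0 s1 :: "int \<times> int"
    assume P: "\<forall>u\<in>J \<sigma>. \<exists>x\<in>J s0. \<exists>l\<in>Lambda. u - l - x \<in> J s1"
    show "\<forall>u\<in>J (prod.swap \<sigma>). \<exists>x\<in>J (prod.swap s0). \<exists>l\<in>Lambda. u - l - x \<in> J (prod.swap s1)"
    proof
      fix u assume "u \<in> J (prod.swap \<sigma>)"
      then have "prod.swap u \<in> J \<sigma>" using swap_mem_J[of "prod.swap u" \<sigma>] by simp
      then obtain x l where "x \<in> J s0" "l \<in> Lambda" "prod.swap u - l - x \<in> J s1" using P by blast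
      then have "prod.swap x \<in> J (prod.swap s0)" "prod.swap l \<in> Lambda"
        "u - prod.swap l - prod.swap x \<in> J (prod.swap s1)"
        using swap_mem_J[of x s0] swap_mem_Lambda[of l] swap_mem_J[of "prod.swap u - l - x" s1]
        by (simp_all add: swap_diff)
      then show "\<exists>x\<in>J (prod.swap s0). \<exists>l\<in>Lambda. u - l - x \<in> J (prod.swap s1)" by blast
    qed
  qed
  then show thesis using assms(2) that by blast
qed

text \<open>The exceptional point \<open>P_or s0 e + Q_or s1 e\<close>, where \<open>F\<^sub>\<sigma>\<close> vanishes.\<close>

lemma exceptional_point:
  assumes "farey_mediant \<sigma> s0 s1" and e: "e = orient s0 s1"
  shows "P_or s0 e \<in> J s0" "Q_or s1 e \<in> J s1" "P_or s0 e + Q_or s1 e \<notin> J \<sigma>"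
    "P_or s0 e + Q_or s1 e - P_or s1 e \<notin> J s0"
proof -
  obtain q0 p0 q1 p1 where c: "s0 = (q0, p0)" "s1 = (q1, p1)" "\<sigma> = (q0 + q1, p0 + p1)"
    and nn: "0 \<le> q0" "0 \<le> p0" "0 \<le> q1" "0 \<le> p1" and o: "orient s0 s1 = q1 * p0 - q0 * p1"
    using farey_mediant_coords[OF assms(1)] by metis
  have "P_or s0 e \<in> J s0 \<and> Q_or s1 e \<in> J s1 \<and> P_or s0 e + Q_or s1 e \<notin> J \<sigma> \<and>
    P_or s0 e + Q_or s1 e - P_or s1 e \<notin> J s0"
    using farey_mediant_orient[OF assms(1)]
  proof
    assume "orient s0 s1 = 1"
    then have ori: "q1 * p0 - q0 * p1 = 1" and "e = 1" using o e by simp_all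
    moreover have "p0 * (q0 - 2 * q1) + q0 * (2 * p1 - p0) < 0"
      "(p0 + p1) * (q0 - q1) + (q0 + q1) * (p1 - p0) < 0"
      using ori by (simp_all add: algebra_simps)
    ultimately show ?thesis
      using Ppt_mem_J[of q0 p0] Qpt_mem_J[of q1 p1] farey_orient_pos[OF ori nn] nn
      by (simp add: P_or_def Q_or_def c Ppt_def Qpt_def mem_J_iff algebra_simps)
  next
    assume "orient s0 s1 = -1"
    then have ori: "q0 * p1 - q1 * p0 = 1" and "e = -1" using o e by simp_all
    moreover have "p0 * (2 * q1 - q0) + q0 * (p0 - 2 * p1) < 0"
      "(p0 + p1) * (q1 - q0) + (q0 + q1) * (p0 - p1) < 0"
      using ori by (simp_all add: algebra_simps)
    ultimately show ?thesis
      using Qpt_mem_J[of q0 p0] Ppt_mem_J[of q1 p1] farey_orient_pos[OF ori nn(3,4,1,2)] nn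
      by (simp add: P_or_def Q_or_def c Ppt_def Qpt_def mem_J_iff algebra_simps)
  qed
  then show "P_or s0 e \<in> J s0" "Q_or s1 e \<in> J s1" "P_or s0 e + Q_or s1 e \<notin> J \<sigma>"
    "P_or s0 e + Q_or s1 e - P_or s1 e \<notin> J s0"
    by blast+
qed

lemma Ppt_add: "Ppt (a + b) 0 = Ppt a 0 + Ppt b 0"
  and Qpt_add: "Qpt (a + b) 0 = Qpt a 0 + Qpt b 0"
  by (cases a, cases b, simp add: Ppt_def Qpt_def)+

lemma P_or_add: "P_or (a + b) e = P_or a e + P_or b e"
  and Q_or_add: "Q_or (a + b) e = Q_or a e + Q_or b e"
  by (simp_all add: P_or_def Q_or_def Ppt_add Qpt_add)

lemma farey_child_corners:
  assumes \<sigma>: "farey_mediant \<sigma> s0 s1" and s1: "farey_mediant s1 s0 s'"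
  shows "orient s0 s' = orient s0 s1" "Q_or s' (orient s0 s1) \<in> J s'"
    "Ppt \<sigma> 0 \<notin> J s'" "Qpt \<sigma> 0 \<notin> J s'"
proof -
  obtain q0 p0 q' p' where c: "s0 = (q0, p0)" "s' = (q', p')" "s1 = (q0 + q', p0 + p')"
    and nn: "0 \<le> q0" "0 \<le> p0" "0 \<le> q'" "0 \<le> p'" and o: "orient s0 s' = q' * p0 - q0 * p'"
    using farey_mediant_coords[OF s1] by metis
  have \<sigma>_eq: "\<sigma> = (2 * q0 + q', 2 * p0 + p')" using \<sigma> c by (auto simp: farey_mediant_def)
  have Q: "s0 \<in> Qset" using s1 by (simp add: farey_mediant_def)
  have det: "\<bar>q' * p0 - q0 * p'\<bar> = 1" using s1 o by (simp add: farey_mediant_def)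
  show "orient s0 s' = orient s0 s1" using c orient_add_right[of s0 s'] by simp
  then have e: "orient s0 s1 = q' * p0 - q0 * p'" using o by simp
  show "Q_or s' (orient s0 s1) \<in> J s'"
  proof (cases "orient s0 s1 = 1")
    case True
    then have "q' * p0 - q0 * p' = 1" using e by simp
    then show ?thesis
      using True farey_orient_pos[OF _ nn] nn Qpt_mem_J[of q' p'] by (simp add: Q_or_def c)
  next
    case False
    then have "q0 * p' - q' * p0 = 1" using det e by linarith
    then show ?thesis
      using False farey_orient_pos[OF _ nn(3,4,1,2)] nn Ppt_mem_J[of q' p'] by (simp add: Q_or_def c)
  qed
  show "Ppt \<sigma> 0 \<notin> J s'"
  proof
    assume "Ppt \<sigma> 0 \<in> J s'"
    then have h: "-p' \<le> -(2 * p0 + p')" "(2 * q0 + q') - (2 * p0 + p') \<le> p' + q' - 2"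
      by (auto simp: \<sigma>_eq c Ppt_def mem_J_iff)
    then have "p0 = 0" using nn by simp
    then have "q0 = 1" using Q c Qset_snd_zero by simp
    then show False using h det \<open>p0 = 0\<close> nn by simp
  qed
  show "Qpt \<sigma> 0 \<notin> J s'"
  proof
    assume "Qpt \<sigma> 0 \<in> J s'"
    then have h: "-q' \<le> -(2 * q0 + q')" "-(2 * q0 + q') + (2 * p0 + p') \<le> p' + q' - 2"
      by (auto simp: \<sigma>_eq c Qpt_def mem_J_iff)
    then have "q0 = 0" using nn by simp
    then have "p0 = 1" using Q c Qset_fst_zero by simp
    then show False using h det \<open>q0 = 0\<close> nn by simp
  qed
qed

lemma Ppt_decomposition_unique:
  fixes q0 p0 q1 p1 a0 b0 a1 b1 l1 l2 :: int
  assumes det: "\<bar>q1 * p0 - q0 * p1\<bar> = 1" and nn: "0 \<le> q0" "0 \<le> p0" "0 \<le> q1" "0 \<le> p1"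
    and x: "(a0, b0) \<in> J (q0, p0)" and y: "(a1, b1) \<in> J (q1, p1)" and l: "(l1, l2) \<in> Lambda"
    and s: "a0 + a1 + l1 = q0 + q1" "b0 + b1 + l2 = - (p0 + p1)"
  shows "(a0, b0) = (if p0 = 0 then (- q0, p0) else (q0, - p0))"
    "(l1, l2) = (if p0 = 0 \<or> p1 = 0 then (2, 0) else (0, 0))"
proof -
  have xm: "-q0 \<le> a0" "-p0 \<le> b0" "a0 + b0 \<le> p0 + q0 - 2" "0 \<le> p0 * a0 + q0 * b0"
    using x by (auto simp: mem_J_iff)
  have ym: "-q1 \<le> a1" "-p1 \<le> b1" "a1 + b1 \<le> p1 + q1 - 2" "0 \<le> p1 * a1 + q1 * b1"
    using y by (auto simp: mem_J_iff)
  have lo: "l1 = 0 \<and> l2 = 0 \<or> l1 = 0 \<and> l2 = 2 \<or> l1 = 2 \<and> l2 = 0" using l by (simp add: Lambda_cases)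
  have b: "b0 = - p0" "b1 = - p1" "l2 = 0" using xm(2) ym(2) s(2) lo by auto
  have w0: "p0 * q0 \<le> p0 * a0" and w1: "p1 * q1 \<le> p1 * a1"
    using xm(4) ym(4) b by (simp_all add: algebra_simps)
  consider "p0 = 0" | "p1 = 0" | "0 < p0" "0 < p1" using nn by linarith
  then have "(a0, b0) = (if p0 = 0 then (- q0, p0) else (q0, - p0)) \<and>
    (l1, l2) = (if p0 = 0 \<or> p1 = 0 then (2, 0) else (0, 0))"
  proof cases
    case 1
    then have "q0 = 1" "p1 = 1" using det nn by (auto simp: abs_mult zmult_eq_1_iff)
    then show ?thesis using xm ym b 1 w1 s by auto
  next
    case 2
    then have "q1 = 1" "p0 = 1" using det nn by (auto simp: abs_mult zmult_eq_1_iff)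
    then show ?thesis using xm ym b 2 w0 s by auto
  next
    case 3
    then have "q0 \<le> a0" "q1 \<le> a1" using w0 w1 by auto
    then show ?thesis using 3 b s lo by auto
  qed
  then show "(a0, b0) = (if p0 = 0 then (- q0, p0) else (q0, - p0))"
    "(l1, l2) = (if p0 = 0 \<or> p1 = 0 then (2, 0) else (0, 0))" by simp_all
qed

lemma Ppt_mediant_decomposition:
  assumes "farey_mediant \<sigma> s0 s1"
  obtains l x where "{(l', x'). l' \<in> Lambda \<and> x' \<in> J s0 \<and> Ppt \<sigma> 0 - l' - x' \<in> J s1} = {(l, x)}"
    "x \<in> {Ppt s0 0, Qpt s0 0}" "Ppt \<sigma> 0 - l - x \<in> {Ppt s1 0, Qpt s1 0}"
proof -
  obtain q0 p0 q1 p1 where c: "s0 = (q0, p0)" "s1 = (q1, p1)" "\<sigma> = (q0 + q1, p0 + p1)"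
    and nn: "0 \<le> q0" "0 \<le> p0" "0 \<le> q1" "0 \<le> p1" and o: "orient s0 s1 = q1 * p0 - q0 * p1"
    using farey_mediant_coords[OF assms] by metis
  have det: "\<bar>q1 * p0 - q0 * p1\<bar> = 1" using assms o by (simp add: farey_mediant_def)
  have Q: "(q0, p0) \<in> Qset" "(q1, p1) \<in> Qset" using assms c by (auto simp: farey_mediant_def)
  define x where "x = (if p0 = 0 then (- q0, p0) else (q0, - p0))"
  define l :: "int \<times> int" where "l = (if p0 = 0 \<or> p1 = 0 then (2, 0) else (0, 0))"
  have unique: "(l', x') = (l, x)" if "l' \<in> Lambda" "x' \<in> J s0" "Ppt \<sigma> 0 - l' - x' \<in> J s1" for l' x'
  proof -
    obtain a0 b0 a1 b1 l1 l2 where v: "x' = (a0, b0)" "l' = (l1, l2)" "Ppt \<sigma> 0 - l' - x' = (a1, b1)"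
      by (metis prod.collapse)
    then have "a0 + a1 + l1 = q0 + q1" "b0 + b1 + l2 = - (p0 + p1)" by (auto simp: c Ppt_def)
    from Ppt_decomposition_unique[OF det nn _ _ _ this] that v c show ?thesis
      by (simp add: l_def x_def)
  qed
  have "l \<in> Lambda \<and> x \<in> J s0 \<and> Ppt \<sigma> 0 - l - x \<in> J s1 \<and> x \<in> {Ppt s0 0, Qpt s0 0} \<and>
      Ppt \<sigma> 0 - l - x \<in> {Ppt s1 0, Qpt s1 0}"
  proof -
    consider "p0 = 0" | "p1 = 0" | "1 \<le> p0" "1 \<le> p1" using nn by linarith
    then show ?thesis
    proof cases
      case 1
      then have "q0 = 1" using Q(1) Qset_snd_zero by simp
      then have "p1 = 1" using 1 det nn by simp
      then show ?thesis using 1 \<open>q0 = 1\<close> Qpt_mem_J[of 1 0] Ppt_mem_J[of q1 1] nn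
        by (simp add: l_def x_def c Lambda_def Ppt_def Qpt_def)
    next
      case 2
      then have "q1 = 1" using Q(2) Qset_snd_zero by simp
      then have "p0 = 1" using 2 det nn by simp
      then show ?thesis using 2 \<open>q1 = 1\<close> Ppt_mem_J[of q0 1] Qpt_mem_J[of 1 0] nn
        by (simp add: l_def x_def c Lambda_def Ppt_def Qpt_def)
    next
      case 3
      then show ?thesis using Ppt_mem_J[of q0 p0] Ppt_mem_J[of q1 p1] nn
        by (simp add: l_def x_def c Lambda_def Ppt_def Qpt_def)
    qed
  qed
  then show thesis using that unique by blast
qed

lemma Qpt_mediant_decomposition:
  assumes "farey_mediant \<sigma> s0 s1"
  obtains l x where "{(l', x'). l' \<in> Lambda \<and> x' \<in> J s0 \<and> Qpt \<sigma> 0 - l' - x' \<in> J s1} = {(l, x)}"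
    "x \<in> {Ppt s0 0, Qpt s0 0}" "Qpt \<sigma> 0 - l - x \<in> {Ppt s1 0, Qpt s1 0}"
proof -
  have swap_corners:
    "Ppt (prod.swap s) 0 = prod.swap (Qpt s 0)" "Qpt (prod.swap s) 0 = prod.swap (Ppt s 0)"
    for s :: "int \<times> int" by (cases s, simp add: Ppt_def Qpt_def)+
  obtain l x where lx: "{(l', x'). l' \<in> Lambda \<and> x' \<in> J (prod.swap s0) \<and>
      Ppt (prod.swap \<sigma>) 0 - l' - x' \<in> J (prod.swap s1)} = {(l, x)}"
    "x \<in> {Ppt (prod.swap s0) 0, Qpt (prod.swap s0) 0}"
    "Ppt (prod.swap \<sigma>) 0 - l - x \<in> {Ppt (prod.swap s1) 0, Qpt (prod.swap s1) 0}"
    using Ppt_mediant_decomposition[OF farey_mediant_swap[OF assms]] by blast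
  have "(l', x') \<in> {(l', x'). l' \<in> Lambda \<and> x' \<in> J s0 \<and> Qpt \<sigma> 0 - l' - x' \<in> J s1} \<longleftrightarrow>
    (prod.swap l', prod.swap x') \<in> {(l', x'). l' \<in> Lambda \<and> x' \<in> J (prod.swap s0) \<and>
      Ppt (prod.swap \<sigma>) 0 - l' - x' \<in> J (prod.swap s1)}" for l' x'
    using swap_mem_J[of x' s0] swap_mem_Lambda[of l'] swap_mem_J[of "Qpt \<sigma> 0 - l' - x'" s1]
    by (simp add: swap_corners swap_diff)
  then have set_eq: "{(l', x'). l' \<in> Lambda \<and> x' \<in> J s0 \<and> Qpt \<sigma> 0 - l' - x' \<in> J s1}
      = {(prod.swap l, prod.swap x)}"
    unfolding lx(1) by (auto simp: prod_eq_iff)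
  have "prod.swap ` {Ppt (prod.swap s) 0, Qpt (prod.swap s) 0} = {Ppt s 0, Qpt s 0}" for s
    by (auto simp: swap_corners)
  then have corners: "prod.swap x \<in> {Ppt s0 0, Qpt s0 0}"
    "prod.swap (Ppt (prod.swap \<sigma>) 0 - l - x) \<in> {Ppt s1 0, Qpt s1 0}"
    using imageI[OF lx(2), of prod.swap] imageI[OF lx(3), of prod.swap] by simp_all
  moreover have "prod.swap (Ppt (prod.swap \<sigma>) 0 - l - x) = Qpt \<sigma> 0 - prod.swap l - prod.swap x"
    by (simp add: swap_corners swap_diff)
  ultimately show thesis using that[OF set_eq corners(1)] corners(2) by simp
qed

text \<open>For \<open>s = 1/0\<close> the only point of \<open>J\<^sub>s\<close> is \<open>Q\<^sup>s\<^sub>0\<close> and \<open>P\<^sup>s\<^sub>0 = Q\<^sup>s\<^sub>0 + (2, 0)\<close>; symmetrically for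
  \<open>s = 0/1\<close>. This is where \<open>\<Lambda>\<close> is needed.\<close>

lemma Lambda_J_corner_pairs:
  assumes "s \<in> Qset"
  obtains lP xP lQ xQ where "lP \<in> Lambda" "xP \<in> J s" "lP + xP = Ppt s 0"
    "lQ \<in> Lambda" "xQ \<in> J s" "lQ + xQ = Qpt s 0" "(lP, xP) \<noteq> (lQ, xQ)"
    "xP \<in> {Ppt s 0, Qpt s 0}" "xQ \<in> {Ppt s 0, Qpt s 0}"
proof -
  obtain q p where s: "s = (q, p)" by fastforce
  from assms[unfolded s] show thesis
  proof (cases rule: Qset_cases)
    case 1
    then have "Qpt s 0 \<in> J s" using Qpt_mem_J[of 1 0] s by (simp add: Qinf_def)
    then show thesis using that[of "(2, 0)" "Qpt s 0" 0 "Qpt s 0"] 1 s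
      by (simp add: Lambda_def Ppt_def Qpt_def Qinf_def zero_prod_def)
  next
    case 2
    then have "Ppt s 0 \<in> J s" using Ppt_mem_J[of 0 1] s by (simp add: Qzero_def)
    then show thesis using that[of 0 "Ppt s 0" "(0, 2)" "Ppt s 0"] 2 s
      by (simp add: Lambda_def Ppt_def Qpt_def Qzero_def zero_prod_def)
  next
    case 3
    then have "Ppt s 0 \<in> J s" "Qpt s 0 \<in> J s" using Ppt_mem_J Qpt_mem_J s by auto
    then show thesis using that[of 0 "Ppt s 0" 0 "Qpt s 0"] 3 s
      by (simp add: Lambda_def Ppt_def Qpt_def zero_prod_def)
  qed
qed

section \<open>The induction\<close>

definition shift_bounds :: "(int \<times> int \<Rightarrow> int) \<Rightarrow> (int \<times> int \<Rightarrow> int) \<Rightarrow> (int \<times> int \<Rightarrow> int) \<Rightarrow>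
    int \<times> int \<Rightarrow> int \<times> int \<Rightarrow> int \<times> int \<Rightarrow> int \<times> int \<Rightarrow> bool" where
  "shift_bounds f f0 f1 A0 B0 A1 B1 \<longleftrightarrow> (\<forall>u. f1 (u - B0) \<le> f u \<and> f0 (u - A1) \<le> f u \<and>
     (u \<noteq> A0 + B1 \<longrightarrow> f1 (u - A0) \<le> f u \<and> f0 (u - B1) \<le> f u))"

lemma shift_bounds_commute:
  "shift_bounds f f0 f1 A0 B0 A1 B1 \<Longrightarrow> shift_bounds f f1 f0 B1 A1 B0 A0"
  by (auto simp: shift_bounds_def add.commute)

text \<open>The bounds for \<open>f\<^sub>1 = F\<^bsub>s1\<^esub>\<close>, whose parents are \<open>s\<^sub>0\<close> and \<open>s'\<close>, propagate to \<open>f = F\<^sub>\<sigma>\<close>,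
  whose parents are \<open>s\<^sub>0\<close> and \<open>s\<^sub>1 = s\<^sub>0 + s'\<close>: \<open>f = S - f'\<close>, and \<open>S u\<close> contains the two terms
  \<open>f\<^sub>1 (u - A\<^sub>0)\<close>, \<open>f\<^sub>1 (u - B\<^sub>0)\<close>, each of which dominates \<open>f' u\<close> away from the exceptional point.\<close>

lemma shift_bounds_step:
  fixes f f0 f1 f' S :: "int \<times> int \<Rightarrow> int"
  assumes r: "A0 + B0 = 0" "A1 = A0 + A'" "B1 = B0 + B'"
    and S: "\<And>u. f1 (u - A0) + f1 (u - B0) \<le> S u"
    and child: "shift_bounds f1 f0 f' A0 B0 A' B'"
    and exceptional: "f0 (A0 + B1 - A1) \<le> f (A0 + B1)"
    and f: "\<And>u. f u = S u - f' u"
  shows "shift_bounds f f0 f1 A0 B0 A1 B1"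
  unfolding shift_bounds_def
proof (intro allI conjI impI)
  fix u
  have e: "u - A0 - B0 = u" "u - B0 - A0 = u" "u - A0 - A' = u - A1" "u - B0 - B' = u - B1"
    "u - B0 = A0 + B' \<longleftrightarrow> u = A0 + B1"
    using r by (auto simp: algebra_simps)
  have a: "f' u \<le> f1 (u - A0)" "f0 (u - A1) \<le> f1 (u - A0)"
    using child e unfolding shift_bounds_def by metis+
  have b: "f' u \<le> f1 (u - B0)" "f0 (u - B1) \<le> f1 (u - B0)" if "u \<noteq> A0 + B1"
    using child e that unfolding shift_bounds_def by metis+
  note Su = S[of u] f[of u]
  show "f1 (u - B0) \<le> f u" using a Su by linarith
  show "f0 (u - A1) \<le> f u"
  proof (cases "u = A0 + B1")
    case True
    then show ?thesis using exceptional by simp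
  next
    case False
    then show ?thesis using a b Su by fastforce
  qed
  assume "u \<noteq> A0 + B1"
  then show "f1 (u - A0) \<le> f u" "f0 (u - B1) \<le> f u" using a b Su by fastforce+
qed

definition parent_bounds :: "int \<times> int \<Rightarrow> int \<times> int \<Rightarrow> int \<times> int \<Rightarrow> bool" where
  "parent_bounds \<sigma> s0 s1 \<longleftrightarrow> (let e = orient s0 s1 in
     shift_bounds (F \<sigma>) (F s0) (F s1) (P_or s0 e) (Q_or s0 e) (P_or s1 e) (Q_or s1 e))"

lemma P_or_neg: "e = 1 \<or> e = -1 \<Longrightarrow> P_or s (- e) = Q_or s e"
  and Q_or_neg: "e = 1 \<or> e = -1 \<Longrightarrow> Q_or s (- e) = P_or s e"
  by (auto simp: P_or_def Q_or_def)

lemma parent_bounds_commute: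
  assumes "farey_mediant \<sigma> s0 s1" "parent_bounds \<sigma> s0 s1"
  shows "parent_bounds \<sigma> s1 s0"
proof -
  have e: "orient s0 s1 = 1 \<or> orient s0 s1 = -1" by (rule farey_mediant_orient[OF assms(1)])
  have "orient s1 s0 = - orient s0 s1" by (rule orient_commute)
  then show ?thesis
    using shift_bounds_commute assms(2) unfolding parent_bounds_def Let_def
    by (simp add: P_or_neg[OF e] Q_or_neg[OF e])
qed

definition F_inv :: "int \<times> int \<Rightarrow> bool" where
  "F_inv \<sigma> \<longleftrightarrow> (\<forall>u. F \<sigma> u \<noteq> 0 \<longrightarrow> u \<in> J \<sigma>) \<and> (\<forall>u\<in>J \<sigma>. 0 < F \<sigma> u) \<and>
     (\<forall>u\<in>J \<sigma>. u \<in> {Ppt \<sigma> 0, Qpt \<sigma> 0} \<longrightarrow> F \<sigma> u = 1) \<and>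
     (\<forall>s0 s1. farey_mediant \<sigma> s0 s1 \<longrightarrow> parent_bounds \<sigma> s0 s1)"

lemma F_invD:
  assumes "F_inv \<sigma>"
  shows "F \<sigma> u \<noteq> 0 \<Longrightarrow> u \<in> J \<sigma>" "u \<in> J \<sigma> \<Longrightarrow> 0 < F \<sigma> u"
    "u \<in> J \<sigma> \<Longrightarrow> u \<in> {Ppt \<sigma> 0, Qpt \<sigma> 0} \<Longrightarrow> F \<sigma> u = 1"
    "farey_mediant \<sigma> s0 s1 \<Longrightarrow> parent_bounds \<sigma> s0 s1"
  using assms unfolding F_inv_def by blast+

lemma F_inv_nonneg: "F_inv \<sigma> \<Longrightarrow> 0 \<le> F \<sigma> u"
  using F_invD(1,2)[of \<sigma> u] by fastforce

lemma J_zero_one: "J (0, 1) = {(0, -1)}"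
  and J_one_zero: "J (1, 0) = {(-1, 0)}"
  and J_one_one: "J (1, 1) = {(-1, 1), (1, -1)}"
proof -
  have "(a, b) \<in> J (1, 1) \<longleftrightarrow> (a, b) \<in> {(-1, 1), (1, -1)}" for a b :: int
  proof
    assume "(a, b) \<in> J (1, 1)"
    then have "a mod 2 = 1" "-1 \<le> a" "-1 \<le> b" "a + b = 0" by (auto simp: mem_J_iff)
    moreover from this have "a \<noteq> 0" by auto
    ultimately show "(a, b) \<in> {(-1, 1), (1, -1)}" by auto
  qed (auto simp: mem_J_iff)
  then show "J (1, 1) = {(-1, 1), (1, -1)}" by auto
qed (auto simp: mem_J_iff)

lemma F_inv_base:
  assumes "\<sigma> \<in> {Qzero, Qone, Qinf}"
  shows "F_inv \<sigma>"
proof -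
  have F: "F \<sigma> = ind (J \<sigma>)" by (rule F_base[OF assms])
  have one: "parent_bounds Qone Qzero Qinf"
    using F_base[of Qzero] F_base[of Qone] F_base[of Qinf]
    by (simp add: parent_bounds_def shift_bounds_def J_zero_one J_one_one J_one_zero ind_def
        orient_def P_or_def Q_or_def Ppt_def Qpt_def Qzero_def Qone_def Qinf_def)
  have "parent_bounds \<sigma> s0 s1" if "farey_mediant \<sigma> s0 s1" for s0 s1
  proof -
    have "\<sigma> = Qone" using assms farey_mediant_not_Qzero_Qinf[OF that] by auto
    then have "s0 = Qzero \<and> s1 = Qinf \<or> s0 = Qinf \<and> s1 = Qzero"
      using that farey_mediant_Qone_iff[of s0 s1] by (auto simp: doubleton_eq_iff)
    then show ?thesis
      using one parent_bounds_commute farey_mediant_Qone_iff \<open>\<sigma> = Qone\<close> by blast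
  qed
  then show ?thesis by (simp add: F_inv_def F ind_def)
qed

locale farey_step =
  fixes \<sigma> s0 s1 s' :: "int \<times> int"
  assumes \<sigma>: "\<sigma> \<in> Qset" "\<sigma> \<notin> {Qzero, Qone, Qinf}"
    and mediant: "farey_mediant \<sigma> s0 s1" and child: "farey_mediant s1 s0 s'"
    and inv: "F_inv s0" "F_inv s1" "F_inv s'"
begin

abbreviation e where "e \<equiv> orient s0 s1"

abbreviation S where "S u \<equiv> conv (conv (F s0) (F s1)) (ind Lambda) u"

abbreviation exceptional where "exceptional \<equiv> P_or s0 e + Q_or s1 e"

lemma F_eq: "F \<sigma> u = S u - F s' u"
  by (rule F_step[OF \<sigma> mediant child])

lemma support: "F s0 x \<noteq> 0 \<Longrightarrow> x \<in> J s0" "F s1 x \<noteq> 0 \<Longrightarrow> x \<in> J s1" "F s' x \<noteq> 0 \<Longrightarrow> x \<in> J s'"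
  using F_invD(1)[OF inv(1)] F_invD(1)[OF inv(2)] F_invD(1)[OF inv(3)] by blast+

lemma corner_one: "x \<in> J s \<Longrightarrow> x \<in> {Ppt s 0, Qpt s 0} \<Longrightarrow> F s x = 1" if "s \<in> {s0, s1, s'}" for s
  using that F_invD(3)[OF inv(1)] F_invD(3)[OF inv(2)] F_invD(3)[OF inv(3)] by blast

lemma nonneg: "0 \<le> F s0 x" "0 \<le> F s1 x" "0 \<le> F s' x"
  using inv F_inv_nonneg by auto

lemma finite_Lambda_J: "finite (Lambda \<times> J s)"
  by (simp add: finite_J Lambda_def)

lemma S_eq_sum: "S u = (\<Sum>(l, x)\<in>Lambda \<times> J s0. F s0 x * F s1 (u - l - x))"
proof (rule conv_conv_ind_Lambda)
  show "finite (J s0)" by (rule finite_J)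
  show "{x. F s0 x \<noteq> 0} \<subseteq> J s0" using support(1) by blast
  have "{x. F s1 x \<noteq> 0} \<subseteq> J s1" using support(2) by blast
  then show "finite {x. F s1 x \<noteq> 0}" using finite_J by (rule finite_subset)
qed

lemma S_term_nonneg: "0 \<le> (case i of (l, x) \<Rightarrow> F s0 x * F s1 (u - l - x))"
  using nonneg by (auto split: prod.splits)

lemma S_single_term:
  assumes "(l0, x0) \<in> Lambda \<times> J s0"
    and "\<And>l x. l \<in> Lambda \<Longrightarrow> x \<in> J s0 \<Longrightarrow> u - l - x \<in> J s1 \<Longrightarrow> (l, x) = (l0, x0)"
  shows "S u = F s0 x0 * F s1 (u - l0 - x0)"
proof -
  have "S u = (\<Sum>(l, x)\<in>{(l0, x0)}. F s0 x * F s1 (u - l - x))"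
    unfolding S_eq_sum
  proof (rule sum.mono_neutral_right)
    show "finite (Lambda \<times> J s0)" by (rule finite_Lambda_J)
    show "{(l0, x0)} \<subseteq> Lambda \<times> J s0" using assms(1) by simp
    show "\<forall>i\<in>Lambda \<times> J s0 - {(l0, x0)}. (case i of (l, x) \<Rightarrow> F s0 x * F s1 (u - l - x)) = 0"
      using assms(2) support(2) by fastforce
  qed
  then show ?thesis by simp
qed

lemma S_outside:
  assumes "u \<notin> J \<sigma>" "u \<noteq> exceptional"
  shows "S u = 0"
  unfolding S_eq_sum
proof (rule sum.neutral, clarify)
  fix l x assume lx: "l \<in> Lambda" "x \<in> J s0"
  show "F s0 x * F s1 (u - l - x) = 0"
  proof (rule ccontr)
    assume "F s0 x * F s1 (u - l - x) \<noteq> 0"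
    then have "u - l - x \<in> J s1" using support(2) by auto
    moreover have "x + (u - l - x) + l = u" by (simp add: algebra_simps)
    ultimately have "x = P_or s0 e" "u - l - x = Q_or s1 e" "l = 0"
      using J_sum_rigid_oriented[OF mediant lx(2) _ lx(1)] assms(1) by metis+
    then show False using assms(2) by (simp add: algebra_simps)
  qed
qed

lemma S_exceptional: "S exceptional = 1"
proof -
  have "P_or s0 e \<in> J s0" "Q_or s1 e \<in> J s1" "exceptional \<notin> J \<sigma>"
    using exceptional_point[OF mediant refl] by simp_all
  moreover have "(l, x) = (0, P_or s0 e)"
    if "l \<in> Lambda" "x \<in> J s0" "exceptional - l - x \<in> J s1" for l x
  proof -
    have "x + (exceptional - l - x) + l = exceptional" by (simp add: algebra_simps)
    then show ?thesis using J_sum_rigid_oriented[OF mediant that(2,3,1)] \<open>exceptional \<notin> J \<sigma>\<close> by metis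
  qed
  moreover have "(0, P_or s0 e) \<in> Lambda \<times> J s0"
    using \<open>P_or s0 e \<in> J s0\<close> by (simp add: Lambda_def zero_prod_def)
  ultimately have "S exceptional = F s0 (P_or s0 e) * F s1 (exceptional - 0 - P_or s0 e)"
    by (intro S_single_term) blast+
  also have "\<dots> = F s0 (P_or s0 e) * F s1 (Q_or s1 e)" by simp
  also have "\<dots> = 1"
  proof -
    have "P_or s0 e \<in> {Ppt s0 0, Qpt s0 0}" "Q_or s1 e \<in> {Ppt s1 0, Qpt s1 0}"
      using P_or_Q_or_corners[of s0 e] P_or_Q_or_corners[of s1 e] by blast+
    then show ?thesis
      using corner_one[of s0] corner_one[of s1] \<open>P_or s0 e \<in> J s0\<close> \<open>Q_or s1 e \<in> J s1\<close> by simp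
  qed
  finally show ?thesis .
qed

lemma S_ge_corners: "F s1 (u - Ppt s0 0) + F s1 (u - Qpt s0 0) \<le> S u"
proof -
  have "s0 \<in> Qset" using mediant by (simp add: farey_mediant_def)
  then obtain lP xP lQ xQ where c: "lP \<in> Lambda" "xP \<in> J s0" "lP + xP = Ppt s0 0"
    "lQ \<in> Lambda" "xQ \<in> J s0" "lQ + xQ = Qpt s0 0" "(lP, xP) \<noteq> (lQ, xQ)"
    "xP \<in> {Ppt s0 0, Qpt s0 0}" "xQ \<in> {Ppt s0 0, Qpt s0 0}"
    by (rule Lambda_J_corner_pairs)
  have "F s0 xP = 1" "F s0 xQ = 1" using corner_one c by auto
  moreover have shifts: "u - lP - xP = u - Ppt s0 0" "u - lQ - xQ = u - Qpt s0 0"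
    by (simp_all only: diff_diff_eq c(3,6))
  ultimately have "F s1 (u - Ppt s0 0) + F s1 (u - Qpt s0 0)
      = (\<Sum>i\<in>{(lP, xP), (lQ, xQ)}. case i of (l, x) \<Rightarrow> F s0 x * F s1 (u - l - x))"
    using c(7) by (simp add: shifts)
  also have "\<dots> \<le> (\<Sum>i\<in>Lambda \<times> J s0. case i of (l, x) \<Rightarrow> F s0 x * F s1 (u - l - x))"
    using c(1,2,4,5) S_term_nonneg by (intro sum_mono2 finite_Lambda_J) auto
  finally show ?thesis unfolding S_eq_sum by simp
qed

lemma S_pos: "u \<in> J \<sigma> \<Longrightarrow> 0 < S u"
proof -
  assume "u \<in> J \<sigma>"
  then obtain x l where xl: "x \<in> J s0" "l \<in> Lambda" "u - l - x \<in> J s1"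
    by (rule J_mediant_subset_sum_oriented[OF mediant])
  have "(case (l, x) of (l, x) \<Rightarrow> F s0 x * F s1 (u - l - x))
      \<le> (\<Sum>i\<in>Lambda \<times> J s0. case i of (l, x) \<Rightarrow> F s0 x * F s1 (u - l - x))"
    using xl by (intro member_le_sum S_term_nonneg finite_Lambda_J) simp
  moreover have "0 < F s0 x * F s1 (u - l - x)" using F_invD(2) inv xl by simp
  ultimately show "0 < S u" unfolding S_eq_sum by simp
qed

lemma S_corner:
  assumes "C \<in> {Ppt \<sigma> 0, Qpt \<sigma> 0}"
  shows "S C = 1"
proof -
  obtain l x where lx: "{(l', x'). l' \<in> Lambda \<and> x' \<in> J s0 \<and> C - l' - x' \<in> J s1} = {(l, x)}"
    "x \<in> {Ppt s0 0, Qpt s0 0}" "C - l - x \<in> {Ppt s1 0, Qpt s1 0}"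
    using assms Ppt_mediant_decomposition[OF mediant] Qpt_mediant_decomposition[OF mediant] by blast
  then have "l \<in> Lambda" "x \<in> J s0" "C - l - x \<in> J s1" by auto
  then have "S C = F s0 x * F s1 (C - l - x)"
    using lx(1) by (intro S_single_term) auto
  also have "\<dots> = 1" using corner_one lx(2,3) \<open>x \<in> J s0\<close> \<open>C - l - x \<in> J s1\<close> by simp
  finally show ?thesis .
qed

lemma exceptional_eq: "exceptional = Q_or s' e"
proof -
  have "s1 = s0 + s'" using child by (simp add: farey_mediant_def)
  then have "exceptional = (P_or s0 e + Q_or s0 e) + Q_or s' e" by (simp add: Q_or_add add.assoc)
  then show ?thesis by (simp add: P_or_add_Q_or)
qed

lemma F_exceptional: "F \<sigma> exceptional = 0"
proof -
  have "Q_or s' e \<in> J s'" using farey_child_corners[OF mediant child] by simp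
  moreover have "Q_or s' e \<in> {Ppt s' 0, Qpt s' 0}" using P_or_Q_or_corners[of s' e] by blast
  ultimately have "F s' exceptional = 1" using corner_one[of s'] exceptional_eq by simp
  then show ?thesis using F_eq S_exceptional by simp
qed

lemma child_bounds: "shift_bounds (F s1) (F s0) (F s') (P_or s0 e) (Q_or s0 e) (P_or s' e) (Q_or s' e)"
  using F_invD(4)[OF inv(2) child] farey_child_corners(1)[OF mediant child]
  by (simp add: parent_bounds_def Let_def)

lemma S_ge_oriented_corners: "F s1 (u - P_or s0 e) + F s1 (u - Q_or s0 e) \<le> S u"
  using S_ge_corners[of u] by (auto simp: P_or_def Q_or_def)

lemma bounds: "parent_bounds \<sigma> s0 s1"
proof -
  have s1: "s1 = s0 + s'" using child by (simp add: farey_mediant_def)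
  have "F s0 (exceptional - P_or s1 e) = 0"
    using exceptional_point(4)[OF mediant refl] support(1) by blast
  then have "F s0 (exceptional - P_or s1 e) \<le> F \<sigma> exceptional" using F_exceptional by simp
  then show ?thesis
    unfolding parent_bounds_def Let_def
    using shift_bounds_step[OF P_or_add_Q_or P_or_add[of s0 s' e, folded s1]
        Q_or_add[of s0 s' e, folded s1] S_ge_oriented_corners child_bounds _ F_eq]
    by blast
qed

lemma F_nonneg: "0 \<le> F \<sigma> u"
  using bounds nonneg(2)[of "u - Q_or s0 e"] order_trans
  unfolding parent_bounds_def shift_bounds_def Let_def by blast

lemma F_support: "F \<sigma> u \<noteq> 0 \<Longrightarrow> u \<in> J \<sigma>"
proof (rule ccontr)
  assume "F \<sigma> u \<noteq> 0" "u \<notin> J \<sigma>"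
  then have "u \<noteq> exceptional" using F_exceptional by auto
  then have "F \<sigma> u \<le> 0" using S_outside \<open>u \<notin> J \<sigma>\<close> F_eq nonneg(3) by simp
  then show False using F_nonneg[of u] \<open>F \<sigma> u \<noteq> 0\<close> by simp
qed

lemma F_pos:
  assumes "u \<in> J \<sigma>"
  shows "0 < F \<sigma> u"
proof -
  have "u \<noteq> exceptional" using assms exceptional_point(3)[OF mediant refl] by auto
  then have "u - Q_or s0 e \<noteq> P_or s0 e + Q_or s' e"
    using exceptional_eq P_or_add_Q_or[of s0 e] by (auto simp: algebra_simps)
  moreover have cb: "\<And>v. F s' (v - Q_or s0 e) \<le> F s1 v"
    "\<And>v. v \<noteq> P_or s0 e + Q_or s' e \<Longrightarrow> F s' (v - P_or s0 e) \<le> F s1 v"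
    using child_bounds unfolding shift_bounds_def by blast+
  moreover have eqs: "u - P_or s0 e - Q_or s0 e = u" "u - Q_or s0 e - P_or s0 e = u"
    using P_or_add_Q_or[of s0 e] by (simp_all add: diff_diff_eq add.commute)
  ultimately have "F s' u \<le> F s1 (u - P_or s0 e)" "F s' u \<le> F s1 (u - Q_or s0 e)"
    using cb(1)[of "u - P_or s0 e", unfolded eqs(1)] cb(2)[of "u - Q_or s0 e", unfolded eqs(2)]
    by simp_all
  then show ?thesis
    using F_eq[of u] S_ge_oriented_corners[of u] S_pos[OF assms] nonneg(3)[of u] by linarith
qed

lemma F_corner:
  assumes "u \<in> {Ppt \<sigma> 0, Qpt \<sigma> 0}"
  shows "F \<sigma> u = 1"
proof -
  have "u \<notin> J s'" using assms farey_child_corners(3,4)[OF mediant child] by auto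
  then have "F s' u = 0" using support(3)[of u] by blast
  then show ?thesis using F_eq[of u] S_corner[OF assms] by simp
qed

lemma F_inv: "F_inv \<sigma>"
proof -
  have "parent_bounds \<sigma> a b" if "farey_mediant \<sigma> a b" for a b
    using farey_mediant_unique[OF \<sigma>(1) mediant that] bounds parent_bounds_commute[OF mediant] by blast
  then show ?thesis using F_support F_pos F_corner unfolding F_inv_def by blast
qed

end

lemma F_inv_Qset: "\<sigma> \<in> Qset \<Longrightarrow> F_inv \<sigma>"
proof (induction rule: farey_induct)
  case (base \<sigma>)
  then show ?case by (rule F_inv_base)
next
  case (step \<sigma> s0 s1)
  then show ?case by (rule farey_step.F_inv[OF farey_step.intro])
qed

lemma parent_bounds_corners:
  assumes "farey_mediant \<sigma> s0 s1" "parent_bounds \<sigma> s0 s1" "u \<in> J \<sigma>"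
  shows "F s1 (u - Ppt s0 0) \<le> F \<sigma> u" "F s1 (u - Qpt s0 0) \<le> F \<sigma> u"
    "F s0 (u - Ppt s1 0) \<le> F \<sigma> u" "F s0 (u - Qpt s1 0) \<le> F \<sigma> u"
proof -
  let ?e = "orient s0 s1"
  have "u \<noteq> P_or s0 ?e + Q_or s1 ?e" using exceptional_point(3)[OF assms(1) refl] assms(3) by auto
  then have "F s1 (u - x) \<le> F \<sigma> u" "F s0 (u - y) \<le> F \<sigma> u"
    if "x \<in> {P_or s0 ?e, Q_or s0 ?e}" "y \<in> {P_or s1 ?e, Q_or s1 ?e}" for x y
    using assms(2) that unfolding parent_bounds_def shift_bounds_def Let_def by blast+
  then show "F s1 (u - Ppt s0 0) \<le> F \<sigma> u" "F s1 (u - Qpt s0 0) \<le> F \<sigma> u"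
    "F s0 (u - Ppt s1 0) \<le> F \<sigma> u" "F s0 (u - Qpt s1 0) \<le> F \<sigma> u"
    unfolding P_or_Q_or_corners by blast+
qed

theorem lemma9:
  shows "(\<forall>s\<in>Qset. \<forall>u\<in>J s. 0 < F s u) \<and>
         (\<forall>s s0 s1. s \<in> Qset \<and> s \<notin> {Qzero, Qinf} \<and> is_parents s s0 s1 \<longrightarrow>
            (\<forall>u. ind (J s) u *
                   max (max (conv (ind {Ppt s0 0}) (F s1) u) (conv (ind {Ppt s1 0}) (F s0) u))
                       (max (conv (ind {Qpt s0 0}) (F s1) u) (conv (ind {Qpt s1 0}) (F s0) u))
                 \<le> F s u))"
proof (intro conjI ballI allI impI)
  fix s u
  assume "s \<in> Qset" "u \<in> J s"
  then show "0 < F s u" using F_inv_Qset F_invD(2) by blast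
next
  fix s s0 s1 u
  assume s: "s \<in> Qset \<and> s \<notin> {Qzero, Qinf} \<and> is_parents s s0 s1"
  then have mediant: "farey_mediant s s0 s1" using is_parents_iff_farey_mediant by blast
  have inv: "F_inv s" using s F_inv_Qset by blast
  show "ind (J s) u *
      max (max (conv (ind {Ppt s0 0}) (F s1) u) (conv (ind {Ppt s1 0}) (F s0) u))
          (max (conv (ind {Qpt s0 0}) (F s1) u) (conv (ind {Qpt s1 0}) (F s0) u)) \<le> F s u"
  proof (cases "u \<in> J s")
    case False
    then show ?thesis using F_inv_nonneg[OF inv] by (simp add: ind_def)
  next
    case True
    then show ?thesis
      using parent_bounds_corners[OF mediant F_invD(4)[OF inv mediant] True]
      by (simp add: ind_def conv_ind_singleton)
  qed
qed

end
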